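(* Let $\lambda_0\in(0,\pi)$. Let $\{U_t,t\in\mathbb{Z}\}$ be a zero-mean weakly stationary process with spectral density $f_U$ continuous on $[0,\pi]$ with $\inf_{\lambda\in[0,\pi]}f_U(\lambda)>0$, whose autocovariance $\gamma_U$ and fourth-order cumulants satisfy $$\sum_{h\in\mathbb{Z}}|h||\gamma_U(h)|<\infty,\qquad \sum_{h_1,h_2,h_3\in\mathbb{Z}}(1+|h_1|+|h_2|+|h_3|)\,|\mathrm{cum}(U_0,U_{h_1},U_{h_2},U_{h_3})|<\infty.$$ Let $(\delta_n)\subset(0,1)$ satisfy $\delta_n\sim n^{-\alpha}$ for some $\alpha\in(0,1/3)$. For each $n$, let $X_{t,\delta_n}=A_{\delta_n}(L)^{-1}U_t$ with $A_\delta(z)=1-2(1-\delta)\cos(\lambda_0)z+(1-\delta)^2z^2$, let $\gamma_{\delta_n}(0)=\mathrm{Var}(X_{t,\delta_n})$, and based on the observations $X_{1,\delta_n},\dots,X_{n,\delta_n}$ let $$\widehat\gamma_{\delta_n}(0)=\frac{2\pi}{n}\sum_{j\in\mathcal{G}(n)}I_{n,\delta_n}(\lambda_{j,n}),\qquad I_{n,\delta_n}(\lambda)=\frac{1}{2\pi n}\Big|\sum_{t=1}^nX_{t,\delta_n}e^{-i\lambda t}\Big|^2,$$ with $\lambda_{j,n}=2\pi j/n$, $\mathcal{G}(n)=\{-N,\dots,-1,1,\dots,N\}$, $N=\lfloor n/2\rfloor$. Then $\widehat\gamma_{\delta_n}(0)/\gamma_{\delta_n}(0)\xrightarrow{P}1$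 as $n\to\infty$.
   Context: $L$ is the lag operator and $A_\delta(L)^{-1}$ the causal inverse filter: $X_{t,\delta}=\sum_{j\ge0}b_{j,\delta}U_{t-j}$ with $1/A_\delta(z)=\sum_{j\ge0}b_{j,\delta}z^j$; its spectral density is $f_\delta(\lambda)=|1-(1-\delta)e^{-i(\lambda-\lambda_0)}|^{-2}|1-(1-\delta)e^{-i(\lambda+\lambda_0)}|^{-2}f_U(\lambda)$. $\delta_n\sim n^{-\alpha}$ means $\delta_n$ is of exact order $n^{-\alpha}$ as $n\to\infty$. *)

theory Defs
  imports "HOL-Probability.Probability"
    "HOL-Computational_Algebra.Formal_Power_Series"
    "HOL-Library.Landau_Symbols"
begin

definition A_fps :: "real \<Rightarrow> real \<Rightarrow> real fps" where
  "A_fps lam0 \<delta> = 1 - fps_const (2 * (1 - \<delta>) * cos lam0) * fps_X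
                    + fps_const ((1 - \<delta>)^2) * fps_X ^ 2"

definition inv_filter_coeff :: "real \<Rightarrow> real \<Rightarrow> nat \<Rightarrow> real" where
  "inv_filter_coeff lam0 \<delta> j = fps_nth (inverse (A_fps lam0 \<delta>)) j"

text \<open>X_{t,delta} = A_delta(L)^{-1} U_t = sum_{j>=0} b_j U_{t-j}.\<close>
definition filtered :: "real \<Rightarrow> real \<Rightarrow> (int \<Rightarrow> 'a \<Rightarrow> real) \<Rightarrow> int \<Rightarrow> 'a \<Rightarrow> real" where
  "filtered lam0 \<delta> U t \<omega> = (\<Sum>j. inv_filter_coeff lam0 \<delta> j * U (t - int j) \<omega>)"

definition cum4 :: "'a measure \<Rightarrow> ('a \<Rightarrow> real) \<Rightarrow> ('a \<Rightarrow> real) \<Rightarrow> ('a \<Rightarrow> real) \<Rightarrow> ('a \<Rightarrow> real) \<Rightarrow> real" where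
  "cum4 M X1 X2 X3 X4 =
     (let Y1 = (\<lambda>\<omega>. X1 \<omega> - integral\<^sup>L M X1);
          Y2 = (\<lambda>\<omega>. X2 \<omega> - integral\<^sup>L M X2);
          Y3 = (\<lambda>\<omega>. X3 \<omega> - integral\<^sup>L M X3);
          Y4 = (\<lambda>\<omega>. X4 \<omega> - integral\<^sup>L M X4)
      in integral\<^sup>L M (\<lambda>\<omega>. Y1 \<omega> * Y2 \<omega> * Y3 \<omega> * Y4 \<omega>)
         - integral\<^sup>L M (\<lambda>\<omega>. Y1 \<omega> * Y2 \<omega>) * integral\<^sup>L M (\<lambda>\<omega>. Y3 \<omega> * Y4 \<omega>)
         - integral\<^sup>L M (\<lambda>\<omega>. Y1 \<omega> * Y3 \<omega>) * integral\<^sup>L M (\<lambda>\<omega>. Y2 \<omega> * Y4 \<omega>)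
         - integral\<^sup>L M (\<lambda>\<omega>. Y1 \<omega> * Y4 \<omega>) * integral\<^sup>L M (\<lambda>\<omega>. Y2 \<omega> * Y3 \<omega>))"

definition periodogram :: "nat \<Rightarrow> (int \<Rightarrow> real) \<Rightarrow> real \<Rightarrow> real" where
  "periodogram n x lam = 1 / (2 * pi * real n) *
     (cmod (\<Sum>t\<in>{1..int n}. complex_of_real (x t) * exp (- (\<i> * complex_of_real (lam * real_of_int t)))))^2"

definition freq_set :: "nat \<Rightarrow> int set" where
  "freq_set n = {- int (n div 2) .. int (n div 2)} - {0}"

definition gamma_hat :: "nat \<Rightarrow> (int \<Rightarrow> real) \<Rightarrow> real" where
  "gamma_hat n x = 2 * pi / real n *
     (\<Sum>j\<in>freq_set n. periodogram n x (2 * pi * real_of_int j / real n))"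

end

theory Submission
  imports Defs "HOL-Real_Asymp.Real_Asymp"
begin

text \<open>
  The filter coefficients are explicit, \<open>b\<^sub>j = (1 - \<delta>)\<^sup>j sin ((j + 1) \<lambda>\<^sub>0) / sin \<lambda>\<^sub>0\<close>.
  Hence \<open>B = \<Sum> |b\<^sub>j| \<le> 1 / (\<delta> sin \<lambda>\<^sub>0)\<close>, while each pair \<open>b\<^sub>2\<^sub>k, b\<^sub>2\<^sub>k\<^sub>+\<^sub>1\<close> contributes at least
  \<open>(1 - \<delta>)\<^sup>4\<^sup>k\<^sup>+\<^sup>2 (1 - |cos \<lambda>\<^sub>0|) / sin\<^sup>2 \<lambda>\<^sub>0\<close> to \<open>\<Sum> b\<^sub>j\<^sup>2\<close>, so that \<open>\<Sum> b\<^sub>j\<^sup>2 \<ge> c / \<delta>\<close>. As the spectral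
  density of \<open>U\<close> is bounded below by some \<open>m > 0\<close>, the variance \<open>v = \<gamma>\<^sub>\<delta>(0) \<ge> 2 \<pi> m \<Sum> b\<^sub>j\<^sup>2\<close>
  is at least of order \<open>1 / \<delta>\<close>.

  Summing the periodogram over the Fourier frequencies turns the estimator into the sample
  second moment \<open>(1/n) \<Sum> X\<^sub>t\<^sup>2\<close>, minus the squared sample mean, plus (for even \<open>n\<close>) the squared
  alternating sample mean. Expanding fourth moments into covariances and cumulants, whose
  absolute sums \<open>G\<close> and \<open>D\<close> are finite, gives for every \<open>a > 0\<close> a bound
  \<open>B\<^sup>4 (D + 2 G\<^sup>2) / (2 a n) + a / 2 + 2 B\<^sup>2 G / n\<close> on the mean absolute deviation of the estimator
  from \<open>v\<close>; it is first proved for finitely truncated filters and then passes to the limit by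
  dominated convergence. With \<open>a = \<eta> v\<close>, Markov's inequality bounds the probability of a
  relative deviation \<open>> \<epsilon>\<close> by \<open>C\<^sub>\<eta> / (n \<delta>\<^sup>2) + \<eta> / (2 \<epsilon>)\<close>, and \<open>n \<delta>\<^sub>n\<^sup>2 \<rightarrow> \<infinity>\<close> because \<open>\<alpha> < 1/2\<close>.
\<close>

section \<open>The coefficients of the inverse filter\<close>

lemma fps_nth_A_fps:
  "fps_nth (A_fps lam0 d) n = (if n = 0 then 1 else if n = 1 then - 2 * (1 - d) * cos lam0
      else if n = 2 then (1 - d)^2 else 0)"
  by (auto simp: A_fps_def fps_X_power_iff algebra_simps)

lemma inv_filter_coeff_recurrence:
  fixes lam0 d :: real
  defines "b \<equiv> inv_filter_coeff lam0 d"
  shows "b 0 = 1" "b 1 = 2 * (1 - d) * cos lam0"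
    "b (Suc (Suc n)) = 2 * (1 - d) * cos lam0 * b (Suc n) - (1 - d)^2 * b n"
proof -
  let ?A = "A_fps lam0 d"
  have inv: "inverse ?A * ?A = 1" by (simp add: inverse_mult_eq_1 fps_nth_A_fps)
  have coeff: "(\<Sum>i=0..m. b i * fps_nth ?A (m - i)) = (if m = 0 then 1 else 0)" for m
    using arg_cong[OF inv, of "\<lambda>f. fps_nth f m"] unfolding fps_mult_nth b_def inv_filter_coeff_def
    by simp
  show "b 0 = 1" using coeff[of 0] by (simp add: fps_nth_A_fps)
  then show "b 1 = 2 * (1 - d) * cos lam0" using coeff[of 1] by (simp add: fps_nth_A_fps algebra_simps)
  have "(\<Sum>i=0..Suc (Suc n). b i * fps_nth ?A (Suc (Suc n) - i))
      = (\<Sum>i\<in>{n, Suc n, Suc (Suc n)}. b i * fps_nth ?A (Suc (Suc n) - i))"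
    by (rule sum.mono_neutral_right) (auto simp: fps_nth_A_fps)
  also have "\<dots> = b (Suc (Suc n)) - 2 * (1 - d) * cos lam0 * b (Suc n) + (1 - d)^2 * b n"
    by (simp add: fps_nth_A_fps Suc_diff_le) (simp add: algebra_simps)
  finally show "b (Suc (Suc n)) = 2 * (1 - d) * cos lam0 * b (Suc n) - (1 - d)^2 * b n"
    using coeff[of "Suc (Suc n)"] by simp
qed

lemma inv_filter_coeff_eq:
  fixes lam0 d :: real
  assumes "sin lam0 \<noteq> 0"
  shows "inv_filter_coeff lam0 d j = (1 - d)^j * sin (real (j + 1) * lam0) / sin lam0"
proof (induction j rule: induct_nat_012)
  case 0
  then show ?case using assms inv_filter_coeff_recurrence(1)[of lam0 d] by simp
next
  case 1
  then show ?case using assms inv_filter_coeff_recurrence(2)[of lam0 d] by (simp add: sin_double)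
next
  case (ge2 n)
  let ?r = "1 - d" and ?x = "real (n + 2) * lam0"
  have power_rearrange: "2 * r * c * (r^(Suc n) * x / s) - r^2 * (r^n * y / s) = r^(n + 2) * (2 * c * x - y) / s"
    for r c x y s :: real
    by (cases "s = 0") (simp_all add: field_simps power2_eq_square)
  have IH: "inv_filter_coeff lam0 d n = ?r^n * sin (?x - lam0) / sin lam0"
    "inv_filter_coeff lam0 d (Suc n) = ?r^(Suc n) * sin ?x / sin lam0"
    using ge2 by (simp_all add: algebra_simps)
  have "inv_filter_coeff lam0 d (Suc (Suc n))
      = 2 * ?r * cos lam0 * (?r^(Suc n) * sin ?x / sin lam0) - ?r^2 * (?r^n * sin (?x - lam0) / sin lam0)"
    unfolding inv_filter_coeff_recurrence(3) IH ..
  also have "\<dots> = ?r^(n + 2) * (2 * cos lam0 * sin ?x - sin (?x - lam0)) / sin lam0"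
    by (rule power_rearrange)
  also have "2 * cos lam0 * sin ?x - sin (?x - lam0) = sin (?x + lam0)"
    by (simp add: sin_add sin_diff)
  also have "?x + lam0 = real (Suc (Suc n) + 1) * lam0"
    by (simp add: algebra_simps)
  finally show ?case by simp
qed

lemma abs_inv_filter_coeff_le:
  assumes "0 < lam0" "lam0 < pi" "d \<le> 1"
  shows "\<bar>inv_filter_coeff lam0 d j\<bar> \<le> (1 - d)^j / sin lam0"
proof -
  have s: "0 < sin lam0" using assms by (simp add: sin_gt_zero)
  have "\<bar>inv_filter_coeff lam0 d j\<bar> = (1 - d)^j * \<bar>sin (real (j + 1) * lam0)\<bar> / sin lam0"
    using assms s by (simp add: inv_filter_coeff_eq abs_mult)
  also have "\<dots> \<le> (1 - d)^j * 1 / sin lam0"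
    using assms s by (intro divide_right_mono mult_left_mono) auto
  finally show ?thesis by simp
qed

lemma
  assumes "0 < lam0" "lam0 < pi" "0 < d" "d < 1"
  shows summable_abs_inv_filter_coeff: "summable (\<lambda>j. \<bar>inv_filter_coeff lam0 d j\<bar>)"
    and suminf_abs_inv_filter_coeff_le: "(\<Sum>j. \<bar>inv_filter_coeff lam0 d j\<bar>) \<le> 1 / (d * sin lam0)"
proof -
  have geom: "summable (\<lambda>j. (1 - d)^j / sin lam0)"
    using assms by (intro summable_divide summable_geometric) simp
  show *: "summable (\<lambda>j. \<bar>inv_filter_coeff lam0 d j\<bar>)"
    by (rule summable_comparison_test'[OF geom, where N=0]) (use assms abs_inv_filter_coeff_le in simp)
  have "(\<Sum>j. \<bar>inv_filter_coeff lam0 d j\<bar>) \<le> (\<Sum>j. (1 - d)^j / sin lam0)"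
    by (rule suminf_le[OF _ * geom]) (use assms abs_inv_filter_coeff_le in auto)
  also have "\<dots> = (\<Sum>j. (1 - d)^j) / sin lam0" using assms by (intro suminf_divide summable_geometric) simp
  also have "\<dots> = 1 / (d * sin lam0)" using assms by (simp add: suminf_geometric)
  finally show "(\<Sum>j. \<bar>inv_filter_coeff lam0 d j\<bar>) \<le> 1 / (d * sin lam0)" .
qed

lemma sin_power2_add_sin_power2_ge: "1 - \<bar>cos l\<bar> \<le> (sin x)^2 + (sin (x + l))^2" for x l :: real
proof -
  define X Y C S where "X = sin x" "Y = cos x" "C = cos l" "S = sin l"
  have XY: "X^2 + Y^2 = 1" unfolding X_Y_C_S_def by simp
  have CS: "C^2 + S^2 = 1" unfolding X_Y_C_S_def by simp
  define D where "D = X^2 + (X * C + Y * S)^2"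
  have D: "D = (sin x)^2 + (sin (x + l))^2" unfolding D_def X_Y_C_S_def sin_add by simp
  show ?thesis
  proof (cases "C \<ge> 0")
    case True
    have "(1 + C) * (D - (1 - C) * (X^2 + Y^2)) = C * ((1 + C) * X + S * Y)^2 + Y^2 * (C^2 + S^2 - 1)"
      unfolding D_def by algebra
    then have "(1 + C) * (D - (1 - C)) \<ge> 0" using CS XY True by simp
    then have "D \<ge> 1 - C" using True by (simp add: zero_le_mult_iff)
    then show ?thesis using True D by (simp add: X_Y_C_S_def)
  next
    case False
    have "(1 - C) * (D - (1 + C) * (X^2 + Y^2)) = - C * ((1 - C) * X - S * Y)^2 + Y^2 * (C^2 + S^2 - 1)"
      unfolding D_def by algebra
    then have "(1 - C) * (D - (1 + C)) \<ge> 0" using CS XY False by (simp add: mult_le_0_iff)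
    then have "D \<ge> 1 + C" using False by (simp add: zero_le_mult_iff)
    then show ?thesis using False D by (simp add: X_Y_C_S_def)
  qed
qed

lemma inv_filter_coeff_pair_ge:
  assumes "0 < lam0" "lam0 < pi" "0 \<le> d" "d \<le> 1"
  defines "b \<equiv> inv_filter_coeff lam0 d"
  shows "(1 - d)^2 * (1 - \<bar>cos lam0\<bar>) / (sin lam0)^2 * ((1 - d)^4)^k \<le> (b (2*k))^2 + (b (2*k+1))^2"
proof -
  let ?r = "1 - d" and ?x = "real (2*k+1) * lam0"
  have s: "sin lam0 \<noteq> 0" using sin_gt_zero[OF assms(1,2)] by simp
  have r: "0 \<le> ?r" "?r \<le> 1" using assms(3,4) by simp_all
  have dec: "(?r^(2*k+1))^2 \<le> (?r^(2*k))^2" using r by (intro power_mono power_decreasing) auto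
  have pow: "?r^2 * (?r^4)^k = (?r^(2*k+1))^2"
  proof -
    have "?r^2 * (?r^4)^k = ?r^(2 + 4*k)" by (simp only: power_add power_mult)
    also have "2 + 4*k = (2*k+1)*2" by simp
    finally show ?thesis by (simp only: power_mult)
  qed
  have b0: "(b (2*k))^2 = (?r^(2*k))^2 * (sin ?x)^2 / (sin lam0)^2"
    unfolding b_def inv_filter_coeff_eq[OF s] by (simp add: power_mult_distrib power_divide)
  have "real (2*k+1+1) * lam0 = ?x + lam0" by (simp add: algebra_simps)
  then have b1: "(b (2*k+1))^2 = (?r^(2*k+1))^2 * (sin (?x + lam0))^2 / (sin lam0)^2"
    unfolding b_def inv_filter_coeff_eq[OF s] by (simp only: power_mult_distrib power_divide)
  have "(1 - d)^2 * (1 - \<bar>cos lam0\<bar>) / (sin lam0)^2 * ((1 - d)^4)^k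
      = (?r^(2*k+1))^2 * (1 - \<bar>cos lam0\<bar>) / (sin lam0)^2"
    unfolding pow[symmetric] by (simp add: field_simps)
  also have "\<dots> \<le> (?r^(2*k+1))^2 * ((sin ?x)^2 + (sin (?x + lam0))^2) / (sin lam0)^2"
    by (intro divide_right_mono mult_left_mono sin_power2_add_sin_power2_ge) simp_all
  also have "\<dots> \<le> ((?r^(2*k))^2 * (sin ?x)^2 + (?r^(2*k+1))^2 * (sin (?x + lam0))^2) / (sin lam0)^2"
    using dec by (intro divide_right_mono) (simp_all add: distrib_left mult_right_mono)
  also have "\<dots> = (b (2*k))^2 + (b (2*k+1))^2"
    unfolding b0 b1 by (simp add: add_divide_distrib)
  finally show ?thesis .
qed

lemma sum_power2_inv_filter_coeff_ge:
  assumes "0 < lam0" "lam0 < pi" "0 < d" "d < 1"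
  shows "\<exists>K. (1 - d)^2 * (1 - \<bar>cos lam0\<bar>) / (8 * d * (sin lam0)^2) \<le> (\<Sum>j<K. (inv_filter_coeff lam0 d j)^2)"
proof -
  let ?b = "inv_filter_coeff lam0 d" and ?r = "1 - d" and ?q = "(1 - d)^4"
  define c where "c = (1 - d)^2 * (1 - \<bar>cos lam0\<bar>) / (sin lam0)^2"
  have q: "0 < ?q" "?q < 1" using assms by (simp_all add: power_less_one_iff)
  obtain M where M: "?q^M < 1/2" using real_arch_pow_inv[of "1/2" ?q] q by auto
  have "1 - ?q = d * (1 + ?r) * (1 + ?r^2)" by (simp add: algebra_simps power2_eq_square power4_eq_xxxx)
  also have "\<dots> \<le> d * 2 * 2" using assms by (intro mult_mono) (auto simp: power_le_one)
  finally have "1 - ?q \<le> 4 * d" by simp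
  then have "(1/2) / (4 * d) \<le> (1 - ?q^M) / (1 - ?q)"
    using M q by (intro frac_le) auto
  then have geom: "1 / (8 * d) \<le> (\<Sum>k<M. ?q^k)"
    using q by (simp add: sum_gp_strict)
  have "c / (8 * d) \<le> c * (\<Sum>k<M. ?q^k)"
    using mult_left_mono[OF geom, of c] by (simp add: c_def)
  also have "\<dots> = (\<Sum>k<M. c * ?q^k)" by (simp add: sum_distrib_left)
  also have "\<dots> \<le> (\<Sum>k<M. (?b (2*k))^2 + (?b (2*k+1))^2)"
    unfolding c_def using assms by (intro sum_mono inv_filter_coeff_pair_ge) auto
  also have "\<dots> = (\<Sum>j<2*M. (?b j)^2)"
    using sum_split_even_odd[where f="\<lambda>j. (?b j)^2" and g="\<lambda>j. (?b j)^2" and n=M] by (simp add: sum.distrib)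
  finally show ?thesis unfolding c_def by (intro exI[of _ "2*M"]) (simp add: field_simps)
qed

section \<open>The estimator as a combination of sample moments\<close>

lemma sum_int_interval_shift:
  fixes f :: "int \<Rightarrow> 'b::comm_monoid_add" and N :: nat
  shows "(\<Sum>j\<in>{- int N..int N}. f j) = (\<Sum>m\<in>{0..2*N}. f (int m - int N))"
  by (rule sum.reindex_bij_witness[where j="\<lambda>j. nat (j + int N)" and i="\<lambda>m. int m - int N"]) auto

lemma sum_root_of_unity_powers:
  fixes n :: nat and k :: int
  assumes n: "n \<ge> 1" and k: "\<bar>k\<bar> < int n"
  defines "w \<equiv> exp (\<i> * complex_of_real (2 * pi * real_of_int k / real n))"
  shows "w ^ n = 1" and "(\<Sum>m<n. w ^ m) = (if k = 0 then of_nat n else 0)"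
proof -
  have "w ^ n = exp (\<i> * complex_of_real (real_of_int k * 2 * pi))"
    using n unfolding w_def exp_of_nat_mult[symmetric] by (simp add: field_simps)
  also have "\<dots> = 1" by (simp add: exp_eq_1)
  finally show wn: "w ^ n = 1" .
  show "(\<Sum>m<n. w ^ m) = (if k = 0 then of_nat n else 0)"
  proof (cases "k = 0")
    case True
    then show ?thesis unfolding w_def by simp
  next
    case False
    have "w \<noteq> 1"
    proof
      assume "w = 1"
      then obtain m :: int where "2 * pi * real_of_int k / real n = 2 * pi * real_of_int m"
        unfolding w_def exp_eq_1 by auto
      then have "real_of_int k = real_of_int m * real n" using n by (simp add: field_simps)
      then have "k = m * int n" by (metis of_int_eq_iff of_int_mult of_int_of_nat_eq)
      then show False using k False by (cases "m = 0") (auto simp: abs_mult)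
    qed
    then show ?thesis using False wn by (simp add: sum_gp_strict)
  qed
qed

lemma exp_i_pi_times_int: "exp (\<i> * complex_of_real (pi * real_of_int k)) = (-1) ^ nat \<bar>k\<bar>"
proof -
  have "exp (\<i> * complex_of_real (pi * real_of_int k)) = cis (pi * real_of_int k)"
    by (simp add: cis_conv_exp)
  also have "\<dots> = complex_of_real (cos (pi * real_of_int k))"
    by (simp add: cis.ctr complex_eq_iff)
  also have "cos (pi * real_of_int k) = cos (real (nat \<bar>k\<bar>) * pi)"
    by (cases "k \<ge> 0") (auto simp: mult.commute)
  also have "\<dots> = (-1) ^ nat \<bar>k\<bar>" by (rule cos_npi)
  finally show ?thesis by simp
qed

lemma sum_freq_set_exp:
  fixes n :: nat and k :: int
  assumes n: "n \<ge> 1" and k: "\<bar>k\<bar> < int n"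
  shows "(\<Sum>j\<in>freq_set n. exp (- (\<i> * complex_of_real (2 * pi * real_of_int j / real n * real_of_int k))))
     = (if k = 0 then of_nat n - 1 else -1) + (if even n then (-1) ^ nat \<bar>k\<bar> else 0)"
proof -
  define N where "N = n div 2"
  define w where "w = exp (\<i> * complex_of_real (2 * pi * real_of_int (- k) / real n))"
  define f where "f = (\<lambda>j::int. exp (- (\<i> * complex_of_real (2 * pi * real_of_int j / real n * real_of_int k))))"
  have geom: "w ^ n = 1" "(\<Sum>m<n. w ^ m) = (if k = 0 then of_nat n else 0)"
    using sum_root_of_unity_powers[of n "- k"] n k unfolding w_def by auto
  have "f (int m - int N) = exp (\<i> * complex_of_real (pi * real_of_int k * (2 * real N / real n))) * w ^ m" for m
  proof -
    have "f (int m - int N) = exp (\<i> * complex_of_real (pi * real_of_int k * (2 * real N / real n))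
        + of_nat m * (\<i> * complex_of_real (2 * pi * real_of_int (- k) / real n)))"
      unfolding f_def by (intro arg_cong[where f=exp]) (simp add: algebra_simps diff_divide_distrib)
    then show ?thesis unfolding w_def exp_add exp_of_nat_mult by simp
  qed
  then have all: "(\<Sum>j\<in>{- int N..int N}. f j)
      = exp (\<i> * complex_of_real (pi * real_of_int k * (2 * real N / real n))) * (\<Sum>m\<in>{0..2*N}. w ^ m)"
    unfolding sum_int_interval_shift by (simp add: sum_distrib_left)
  have "freq_set n = {- int N..int N} - {0}" unfolding freq_set_def N_def by simp
  then have "(\<Sum>j\<in>freq_set n. f j) = (\<Sum>j\<in>{- int N..int N}. f j) - 1"
    by (simp add: sum_diff1 f_def)
  also note all
  finally have sum_f: "(\<Sum>j\<in>freq_set n. f j)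
      = exp (\<i> * complex_of_real (pi * real_of_int k * (2 * real N / real n))) * (\<Sum>m\<in>{0..2*N}. w ^ m) - 1" .
  show ?thesis
  proof (cases "even n")
    case True
    \<comment> \<open>for even \<open>n\<close> the frequency \<open>\<plusminus>\<pi>\<close> is counted twice\<close>
    then have n2: "2 * N = n" unfolding N_def by simp
    have "(\<Sum>m\<in>{0..2*N}. w ^ m) = (\<Sum>m<n. w ^ m) + w ^ n"
      unfolding n2 by (simp add: atLeast0AtMost lessThan_Suc_atMost[symmetric])
    moreover have "2 * real N / real n = 1" using n by (simp add: n2[symmetric])
    ultimately show ?thesis
      using sum_f geom True exp_i_pi_times_int[of k] unfolding f_def by (auto simp: algebra_simps)
  next
    case False
    then have "2 * N + 1 = n" unfolding N_def by presburger
    then have "(\<Sum>m\<in>{0..2*N}. w ^ m) = (\<Sum>m<n. w ^ m)"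
      by (auto simp: atLeast0AtMost lessThan_Suc_atMost[symmetric])
    then show ?thesis using sum_f geom False unfolding f_def by auto
  qed
qed

lemma minus_one_power_nat_abs_diff:
  fixes s t :: int assumes "0 \<le> s" "0 \<le> t"
  shows "(-1::real) ^ nat \<bar>s - t\<bar> = (-1) ^ nat s * (-1) ^ nat t"
proof -
  have "nat s + nat t = nat \<bar>s - t\<bar> + 2 * min (nat s) (nat t)" using assms by linarith
  then have "even (nat \<bar>s - t\<bar>) \<longleftrightarrow> even (nat s + nat t)" by simp
  then show ?thesis unfolding power_add[symmetric] by (simp add: minus_one_power_iff)
qed

lemma sum_sum_kernel_expand:
  fixes x p :: "int \<Rightarrow> real" and I :: "int set" and c :: real and e :: bool
  assumes "finite I"
  shows "(\<Sum>s\<in>I. \<Sum>t\<in>I. x s * x t * (c * (if s = t then 1 else 0) - 1 + (if e then p s * p t else 0)))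
     = c * (\<Sum>s\<in>I. x s ^ 2) - (\<Sum>s\<in>I. x s)^2 + (if e then (\<Sum>s\<in>I. p s * x s)^2 else 0)"
proof -
  have "x s * x t * (c * (if s = t then 1 else 0) - 1 + (if e then p s * p t else 0))
      = c * (if s = t then x s * x t else 0) - x s * x t + (if e then (p s * x s) * (p t * x t) else 0)" for s t
    by (auto simp: algebra_simps)
  then show ?thesis
    using assms by (simp add: sum.distrib sum_subtractf sum_distrib_left[symmetric] power2_eq_square sum_product)
qed

lemma sum_freq_set_norm_dft_power2:
  fixes x :: "int \<Rightarrow> real" and n :: nat
  assumes n: "n \<ge> 1"
  defines "I \<equiv> {1..int n}"
  shows "(\<Sum>j\<in>freq_set n. (cmod (\<Sum>t\<in>I. complex_of_real (x t) *
            exp (- (\<i> * complex_of_real (2 * pi * real_of_int j / real n * real_of_int t)))))^2)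
     = real n * (\<Sum>t\<in>I. x t ^ 2) - (\<Sum>t\<in>I. x t)^2 + (if even n then (\<Sum>t\<in>I. (-1) ^ nat t * x t)^2 else 0)"
    (is "(\<Sum>j\<in>_. (cmod (?z j))^2) = ?rhs")
proof -
  let ?e = "\<lambda>j h. exp (- (\<i> * complex_of_real (2 * pi * real_of_int j / real n * real_of_int h)))"
  define kernel where "kernel = (\<lambda>k::int. (if k = 0 then real n - 1 else -1) + (if even n then (-1) ^ nat \<bar>k\<bar> else 0))"
  have zz: "?z j * cnj (?z j) = (\<Sum>s\<in>I. \<Sum>t\<in>I. complex_of_real (x s * x t) * ?e j (s - t))" for j
  proof -
    have "?e j s * cnj (?e j t) = ?e j (s - t)" for s t
    proof -
      have "?e j s * cnj (?e j t) = exp (- (\<i> * complex_of_real (2 * pi * real_of_int j / real n * real_of_int s))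
          + \<i> * complex_of_real (2 * pi * real_of_int j / real n * real_of_int t))"
        by (simp add: exp_cnj flip: exp_add)
      also have "\<dots> = ?e j (s - t)" by (intro arg_cong[where f=exp]) (simp add: algebra_simps diff_divide_distrib)
      finally show ?thesis .
    qed
    then show ?thesis by (simp add: sum_product cnj_sum mult_ac)
  qed
  have "complex_of_real (\<Sum>j\<in>freq_set n. (cmod (?z j))^2) = (\<Sum>j\<in>freq_set n. ?z j * cnj (?z j))"
    by (simp add: complex_norm_square flip: of_real_power)
  also have "\<dots> = (\<Sum>s\<in>I. \<Sum>t\<in>I. complex_of_real (x s * x t) * (\<Sum>j\<in>freq_set n. ?e j (s - t)))"
    unfolding zz by (simp add: sum_distrib_left sum.swap[of _ "freq_set n"])
  also have "\<dots> = (\<Sum>s\<in>I. \<Sum>t\<in>I. complex_of_real (x s * x t * kernel (s - t)))"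
  proof (intro sum.cong refl)
    fix s t assume "s \<in> I" "t \<in> I"
    then have "\<bar>s - t\<bar> < int n" unfolding I_def by auto
    then show "complex_of_real (x s * x t) * (\<Sum>j\<in>freq_set n. ?e j (s - t)) = complex_of_real (x s * x t * kernel (s - t))"
      by (subst sum_freq_set_exp[OF n]) (auto simp: kernel_def)
  qed
  also have "\<dots> = complex_of_real (\<Sum>s\<in>I. \<Sum>t\<in>I. x s * x t * kernel (s - t))" by simp
  finally have "(\<Sum>j\<in>freq_set n. (cmod (?z j))^2) = (\<Sum>s\<in>I. \<Sum>t\<in>I. x s * x t * kernel (s - t))"
    using of_real_eq_iff by blast
  also have "\<dots> = (\<Sum>s\<in>I. \<Sum>t\<in>I. x s * x t *
      (real n * (if s = t then 1 else 0) - 1 + (if even n then (-1) ^ nat s * (-1) ^ nat t else 0)))"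
    by (intro sum.cong refl) (auto simp: kernel_def I_def minus_one_power_nat_abs_diff)
  also have "\<dots> = ?rhs"
    by (rule sum_sum_kernel_expand) (simp add: I_def)
  finally show ?thesis .
qed

lemma gamma_hat_eq:
  fixes x :: "int \<Rightarrow> real" and n :: nat
  assumes n: "n \<ge> 1"
  shows "gamma_hat n x = (\<Sum>t\<in>{1..int n}. x t ^ 2) / real n - ((\<Sum>t\<in>{1..int n}. x t) / real n)^2
     + (if even n then ((\<Sum>t\<in>{1..int n}. (-1) ^ nat t * x t) / real n)^2 else 0)"
proof -
  have "gamma_hat n x = (\<Sum>j\<in>freq_set n. (cmod (\<Sum>t\<in>{1..int n}. complex_of_real (x t) *
            exp (- (\<i> * complex_of_real (2 * pi * real_of_int j / real n * real_of_int t)))))^2) / (real n)^2"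
    unfolding gamma_hat_def periodogram_def
    by (simp add: sum_distrib_left sum_divide_distrib power2_eq_square field_simps)
  then show ?thesis
    using n unfolding sum_freq_set_norm_dft_power2[OF n] by (simp add: field_simps power2_eq_square)
qed

lemma gamma_hat_abs_le:
  fixes x :: "int \<Rightarrow> real" assumes n: "n \<ge> 1"
  shows "\<bar>gamma_hat n x\<bar> \<le> 3 * ((\<Sum>t\<in>{1..int n}. (x t)^2) / real n)"
proof -
  let ?I = "{1..int n}"
  let ?T = "(\<Sum>t\<in>?I. (x t)^2) / real n"
  have weighted_mean: "((\<Sum>t\<in>?I. p t * x t) / real n)^2 \<le> ?T" if p: "\<And>t. \<bar>p t\<bar> \<le> 1" for p :: "int \<Rightarrow> real"
  proof -
    have "(\<Sum>t\<in>?I. p t * x t)^2 \<le> (\<Sum>t\<in>?I. (p t)^2) * (\<Sum>t\<in>?I. (x t)^2)"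
      by (rule Cauchy_Schwarz_ineq_sum)
    also have "\<dots> \<le> (\<Sum>t\<in>?I. 1) * (\<Sum>t\<in>?I. (x t)^2)"
      using p by (intro mult_right_mono sum_mono sum_nonneg) (auto simp: abs_square_le_1)
    finally show ?thesis using n by (simp add: power_divide field_simps power2_eq_square)
  qed
  have A: "((\<Sum>t\<in>?I. x t) / real n)^2 \<le> ?T" using weighted_mean[of "\<lambda>_. 1"] by simp
  have B: "((\<Sum>t\<in>?I. (-1) ^ nat t * x t) / real n)^2 \<le> ?T" by (rule weighted_mean) simp
  have tri: "\<bar>T - a + (if e then b else 0)\<bar> \<le> 3 * T"
    if "0 \<le> a" "a \<le> T" "0 \<le> b" "b \<le> T" for T a b :: real and e
    using that by (cases e) auto
  show ?thesis unfolding gamma_hat_eq[OF n] by (rule tri[OF zero_le_power2 A zero_le_power2 B])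
qed

lemma borel_measurable_gamma_hat:
  assumes "n \<ge> 1" and [measurable]: "\<And>t. F t \<in> borel_measurable M"
  shows "(\<lambda>\<omega>. gamma_hat n (\<lambda>t. F t \<omega>)) \<in> borel_measurable M"
  unfolding gamma_hat_eq[OF assms(1)] by measurable

section \<open>Moments of a process with stationary fourth-order cumulants\<close>

lemma abs_mult_le_power2_add: "\<bar>x * y\<bar> \<le> x^2 + y^2" for x y :: real
proof -
  have "2 * \<bar>x\<bar> * \<bar>y\<bar> \<le> \<bar>x\<bar>^2 + \<bar>y\<bar>^2" by (rule sum_squares_bound)
  moreover have "0 \<le> \<bar>x\<bar> * \<bar>y\<bar>" by simp
  moreover have "\<bar>x * y\<bar> = \<bar>x\<bar> * \<bar>y\<bar>" by (simp add: abs_mult)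
  ultimately show ?thesis by simp
qed

lemma abs_prod4_le_power4_sum: "\<bar>x * y * z * w\<bar> \<le> 2 * (x^4 + y^4 + z^4 + w^4)" for x y z w :: real
proof -
  have "\<bar>x * y * z * w\<bar> = \<bar>x * y\<bar> * \<bar>z * w\<bar>" by (simp add: abs_mult)
  also have "\<dots> \<le> (x^2 + y^2) * (z^2 + w^2)" by (intro mult_mono abs_mult_le_power2_add) auto
  also have "\<dots> \<le> (x^2 + y^2)^2 + (z^2 + w^2)^2"
    using abs_mult_le_power2_add[of "x^2 + y^2" "z^2 + w^2"] by simp
  also have "\<dots> \<le> 2 * (x^4 + y^4 + z^4 + w^4)"
  proof -
    have "2 * x^2 * y^2 \<le> (x^2)^2 + (y^2)^2" "2 * z^2 * w^2 \<le> (z^2)^2 + (w^2)^2"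
      by (rule sum_squares_bound)+
    then show ?thesis by (simp add: power2_sum power_mult[symmetric])
  qed
  finally show ?thesis .
qed

lemma integrable_real_if_abs_le:
  fixes f g :: "'a \<Rightarrow> real"
  assumes "integrable M f" "g \<in> borel_measurable M" "\<And>x. \<bar>g x\<bar> \<le> f x"
  shows "integrable M g"
  using assms(3) by (intro Bochner_Integration.integrable_bound[OF assms(1,2)] AE_I2) (auto intro: order_trans[OF _ abs_ge_self])

lemma sum4_product_12:
  "(\<Sum>i\<in>A. \<Sum>j\<in>A. \<Sum>k\<in>A. \<Sum>l\<in>A. f i j * g k l) = (\<Sum>i\<in>A. \<Sum>j\<in>A. f i j) * (\<Sum>k\<in>A. \<Sum>l\<in>A. g k l)"
  for f g :: "'a \<Rightarrow> 'a \<Rightarrow> real"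
proof -
  have "(\<Sum>i\<in>A. \<Sum>j\<in>A. \<Sum>k\<in>A. \<Sum>l\<in>A. f i j * g k l) = (\<Sum>i\<in>A. \<Sum>k\<in>A. \<Sum>j\<in>A. \<Sum>l\<in>A. f i j * g k l)"
    by (rule sum.cong[OF refl], rule sum.swap)
  then show ?thesis unfolding sum_product .
qed

lemma sum4_product_13:
  "(\<Sum>i\<in>A. \<Sum>j\<in>A. \<Sum>k\<in>A. \<Sum>l\<in>A. f i k * g j l) = (\<Sum>i\<in>A. \<Sum>k\<in>A. f i k) * (\<Sum>j\<in>A. \<Sum>l\<in>A. g j l)"
  for f g :: "'a \<Rightarrow> 'a \<Rightarrow> real"
  unfolding sum_product ..

lemma sum4_product_14:
  "(\<Sum>i\<in>A. \<Sum>j\<in>A. \<Sum>k\<in>A. \<Sum>l\<in>A. f i l * g j k) = (\<Sum>i\<in>A. \<Sum>l\<in>A. f i l) * (\<Sum>j\<in>A. \<Sum>k\<in>A. g j k)"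
  for f g :: "'a \<Rightarrow> 'a \<Rightarrow> real"
proof -
  have "(\<Sum>i\<in>A. \<Sum>j\<in>A. \<Sum>k\<in>A. \<Sum>l\<in>A. f i l * g j k) = (\<Sum>i\<in>A. \<Sum>j\<in>A. \<Sum>l\<in>A. \<Sum>k\<in>A. f i l * g j k)"
    by (rule sum.cong[OF refl], rule sum.cong[OF refl], rule sum.swap)
  then show ?thesis unfolding sum_product .
qed

locale fourth_order_stationary = prob_space M for M :: "'a measure" +
  fixes U :: "int \<Rightarrow> 'a \<Rightarrow> real" and gU :: "int \<Rightarrow> real"
  assumes measurable_U [measurable]: "\<And>t. U t \<in> borel_measurable M"
    and integrable_U_power4: "\<And>t. integrable M (\<lambda>\<omega>. (U t \<omega>) ^ 4)"
    and integral_U: "\<And>t. integral\<^sup>L M (U t) = 0"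
    and integral_U_mult_shift: "\<And>t h. integral\<^sup>L M (\<lambda>\<omega>. U t \<omega> * U (t + h) \<omega>) = gU h"
    and cum4_shift: "\<And>t h1 h2 h3. cum4 M (U t) (U (t + h1)) (U (t + h2)) (U (t + h3))
                                 = cum4 M (U 0) (U h1) (U h2) (U h3)"
begin

definition kappa :: "int \<Rightarrow> int \<Rightarrow> int \<Rightarrow> real" where
  "kappa h1 h2 h3 = cum4 M (U 0) (U h1) (U h2) (U h3)"

lemma integrable_U_prod4: "integrable M (\<lambda>\<omega>. U a \<omega> * U b \<omega> * U c \<omega> * U d \<omega>)"
proof (rule integrable_real_if_abs_le)
  show "\<bar>U a \<omega> * U b \<omega> * U c \<omega> * U d \<omega>\<bar> \<le> 2 * (U a \<omega> ^ 4 + U b \<omega> ^ 4 + U c \<omega> ^ 4 + U d \<omega> ^ 4)" for \<omega>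
    by (rule abs_prod4_le_power4_sum)
qed (use integrable_U_power4 in auto)

lemma integrable_U_power2: "integrable M (\<lambda>\<omega>. (U a \<omega>)^2)"
proof (rule integrable_real_if_abs_le)
  show "\<bar>(U a \<omega>)^2\<bar> \<le> 1 + U a \<omega> ^ 4" for \<omega>
    using abs_mult_le_power2_add[of 1 "(U a \<omega>)^2"] by (simp add: power_mult[symmetric])
qed (use integrable_U_power4 in auto)

lemma integrable_U_mult: "integrable M (\<lambda>\<omega>. U a \<omega> * U b \<omega>)"
proof (rule integrable_real_if_abs_le)
  show "\<bar>U a \<omega> * U b \<omega>\<bar> \<le> (U a \<omega>)^2 + (U b \<omega>)^2" for \<omega>
    by (rule abs_mult_le_power2_add)
qed (use integrable_U_power2 in auto)

lemma integrable_U: "integrable M (U a)"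
proof (rule integrable_real_if_abs_le)
  show "\<bar>U a \<omega>\<bar> \<le> 1 + (U a \<omega>)^2" for \<omega>
    using abs_mult_le_power2_add[of 1 "U a \<omega>"] by simp
qed (use integrable_U_power2 in auto)

lemma integral_U_mult: "integral\<^sup>L M (\<lambda>\<omega>. U a \<omega> * U b \<omega>) = gU (b - a)"
  using integral_U_mult_shift[of a "b - a"] by simp

lemma integral_U_power2: "integral\<^sup>L M (\<lambda>\<omega>. (U a \<omega>)^2) = gU 0"
  using integral_U_mult[of a a] by (simp add: power2_eq_square)

lemma cov_0_nonneg: "0 \<le> gU 0"
  using integral_U_power2[of 0] integral_nonneg_AE[of "\<lambda>\<omega>. (U 0 \<omega>)^2" M] by simp

lemma integral_U_prod4:
  "integral\<^sup>L M (\<lambda>\<omega>. U a \<omega> * U b \<omega> * U c \<omega> * U d \<omega>)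
   = kappa (b - a) (c - a) (d - a) + gU (b - a) * gU (d - c) + gU (c - a) * gU (d - b) + gU (d - a) * gU (c - b)"
proof -
  have "kappa (b - a) (c - a) (d - a) = cum4 M (U a) (U b) (U c) (U d)"
    unfolding kappa_def using cum4_shift[of a "b - a" "c - a" "d - a", symmetric] by simp
  also have "\<dots> = integral\<^sup>L M (\<lambda>\<omega>. U a \<omega> * U b \<omega> * U c \<omega> * U d \<omega>)
      - gU (b - a) * gU (d - c) - gU (c - a) * gU (d - b) - gU (d - a) * gU (c - b)"
    unfolding cum4_def Let_def integral_U by (simp add: integral_U_mult)
  finally show ?thesis by simp
qed

end

section \<open>Finitely truncated filters\<close>

context fourth_order_stationary
begin

definition trunc_filter :: "(nat \<Rightarrow> real) \<Rightarrow> nat \<Rightarrow> int \<Rightarrow> 'a \<Rightarrow> real" where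
  "trunc_filter b K t \<omega> = (\<Sum>j<K. b j * U (t - int j) \<omega>)"

definition trunc_cov :: "(nat \<Rightarrow> real) \<Rightarrow> nat \<Rightarrow> int \<Rightarrow> int \<Rightarrow> real" where
  "trunc_cov b K s t = (\<Sum>i<K. \<Sum>j<K. b i * b j * gU ((t - int j) - (s - int i)))"

definition trunc_cum :: "(nat \<Rightarrow> real) \<Rightarrow> nat \<Rightarrow> int \<Rightarrow> int \<Rightarrow> int \<Rightarrow> int \<Rightarrow> real" where
  "trunc_cum b K a1 a2 a3 a4 = (\<Sum>i<K. \<Sum>j<K. \<Sum>k<K. \<Sum>l<K. b i * b j * b k * b l *
      kappa ((a2 - int j) - (a1 - int i)) ((a3 - int k) - (a1 - int i)) ((a4 - int l) - (a1 - int i)))"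

definition trunc_msq :: "(nat \<Rightarrow> real) \<Rightarrow> nat \<Rightarrow> nat \<Rightarrow> 'a \<Rightarrow> real" where
  "trunc_msq b K n \<omega> = (\<Sum>t\<in>{1..int n}. (trunc_filter b K t \<omega>)^2) / real n"

lemma borel_measurable_trunc_filter [measurable]: "trunc_filter b K t \<in> borel_measurable M"
  unfolding trunc_filter_def by measurable

lemma trunc_filter_mult_eq:
  "trunc_filter b K a1 \<omega> * trunc_filter b K a2 \<omega> =
   (\<Sum>i<K. \<Sum>j<K. (b i * b j) * (U (a1 - int i) \<omega> * U (a2 - int j) \<omega>))"
  unfolding trunc_filter_def sum_product by (simp add: mult_ac)

lemma trunc_filter_prod4_eq:
  "trunc_filter b K a1 \<omega> * trunc_filter b K a2 \<omega> * trunc_filter b K a3 \<omega> * trunc_filter b K a4 \<omega> =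
   (\<Sum>i<K. \<Sum>j<K. \<Sum>k<K. \<Sum>l<K. (b i * b j * b k * b l) *
      (U (a1 - int i) \<omega> * U (a2 - int j) \<omega> * U (a3 - int k) \<omega> * U (a4 - int l) \<omega>))"
proof -
  have "trunc_filter b K a1 \<omega> * trunc_filter b K a2 \<omega> * trunc_filter b K a3 \<omega> * trunc_filter b K a4 \<omega> =
    (trunc_filter b K a1 \<omega> * trunc_filter b K a2 \<omega>) * (trunc_filter b K a3 \<omega> * trunc_filter b K a4 \<omega>)"
    by (simp add: mult_ac)
  also have "\<dots> = (\<Sum>i<K. \<Sum>j<K. \<Sum>k<K. \<Sum>l<K. ((b i * b j) * (U (a1 - int i) \<omega> * U (a2 - int j) \<omega>)) *
      ((b k * b l) * (U (a3 - int k) \<omega> * U (a4 - int l) \<omega>)))"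
    unfolding trunc_filter_mult_eq sum4_product_12 ..
  finally show ?thesis by (simp add: mult_ac)
qed

lemma integrable_trunc_filter_prod4:
  "integrable M (\<lambda>\<omega>. trunc_filter b K a1 \<omega> * trunc_filter b K a2 \<omega> * trunc_filter b K a3 \<omega> * trunc_filter b K a4 \<omega>)"
  unfolding trunc_filter_prod4_eq by (simp add: integrable_U_prod4)

lemma integrable_trunc_filter_mult: "integrable M (\<lambda>\<omega>. trunc_filter b K a1 \<omega> * trunc_filter b K a2 \<omega>)"
  unfolding trunc_filter_mult_eq by (simp add: integrable_U_mult)

lemma integral_trunc_filter_mult:
  "integral\<^sup>L M (\<lambda>\<omega>. trunc_filter b K s \<omega> * trunc_filter b K t \<omega>) = trunc_cov b K s t"
  unfolding trunc_filter_mult_eq trunc_cov_def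
  by (simp add: integral_sum integrable_sum integrable_U_mult integral_U_mult mult_ac)

lemma integral_trunc_filter_prod4:
  "integral\<^sup>L M (\<lambda>\<omega>. trunc_filter b K a1 \<omega> * trunc_filter b K a2 \<omega> * trunc_filter b K a3 \<omega> * trunc_filter b K a4 \<omega>)
   = trunc_cum b K a1 a2 a3 a4 + trunc_cov b K a1 a2 * trunc_cov b K a3 a4
     + trunc_cov b K a1 a3 * trunc_cov b K a2 a4 + trunc_cov b K a1 a4 * trunc_cov b K a2 a3"
proof -
  let ?c = "\<lambda>i j k l. b i * b j * b k * b l"
  have "integral\<^sup>L M (\<lambda>\<omega>. trunc_filter b K a1 \<omega> * trunc_filter b K a2 \<omega> * trunc_filter b K a3 \<omega> * trunc_filter b K a4 \<omega>)
     = (\<Sum>i<K. \<Sum>j<K. \<Sum>k<K. \<Sum>l<K. ?c i j k l *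
        integral\<^sup>L M (\<lambda>\<omega>. U (a1 - int i) \<omega> * U (a2 - int j) \<omega> * U (a3 - int k) \<omega> * U (a4 - int l) \<omega>))"
    unfolding trunc_filter_prod4_eq by (simp add: integral_sum integrable_sum integrable_U_prod4)
  also have "\<dots> = (\<Sum>i<K. \<Sum>j<K. \<Sum>k<K. \<Sum>l<K.
        ?c i j k l * kappa ((a2 - int j) - (a1 - int i)) ((a3 - int k) - (a1 - int i)) ((a4 - int l) - (a1 - int i))
      + (b i * b j * gU ((a2 - int j) - (a1 - int i))) * (b k * b l * gU ((a4 - int l) - (a3 - int k)))
      + (b i * b k * gU ((a3 - int k) - (a1 - int i))) * (b j * b l * gU ((a4 - int l) - (a2 - int j)))
      + (b i * b l * gU ((a4 - int l) - (a1 - int i))) * (b j * b k * gU ((a3 - int k) - (a2 - int j))))"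
    unfolding integral_U_prod4 by (intro sum.cong refl) (simp add: algebra_simps)
  also have "\<dots> = trunc_cum b K a1 a2 a3 a4 + trunc_cov b K a1 a2 * trunc_cov b K a3 a4
      + trunc_cov b K a1 a3 * trunc_cov b K a2 a4 + trunc_cov b K a1 a4 * trunc_cov b K a2 a3"
    unfolding trunc_cum_def trunc_cov_def sum.distrib sum4_product_12 sum4_product_13 sum4_product_14 ..
  finally show ?thesis .
qed

lemma trunc_cov_diag: "trunc_cov b K t t = trunc_cov b K 0 0"
  unfolding trunc_cov_def by simp

lemma trunc_cov_0_eq_integral: "trunc_cov b K 0 0 = integral\<^sup>L M (\<lambda>\<omega>. (trunc_filter b K 1 \<omega>)^2)"
  using integral_trunc_filter_mult[of b K 1 1] trunc_cov_diag[of b K 1] by (simp add: power2_eq_square)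

lemma centered_power2_mult_eq:
  "((x s)^2 - c) * ((x t)^2 - c) = (x s * x s * x t * x t - c * (x s * x s)) - c * (x t * x t) + c^2"
  for x :: "int \<Rightarrow> real"
  by (simp add: power2_eq_square algebra_simps)

lemma integrable_centered_power2_mult:
  "integrable M (\<lambda>\<omega>. ((trunc_filter b K s \<omega>)^2 - c) * ((trunc_filter b K t \<omega>)^2 - c))"
  unfolding centered_power2_mult_eq[where x="\<lambda>t. trunc_filter b K t _"]
  by (simp add: integrable_trunc_filter_prod4 integrable_trunc_filter_mult)

lemma integral_centered_power2_mult:
  "integral\<^sup>L M (\<lambda>\<omega>. ((trunc_filter b K s \<omega>)^2 - trunc_cov b K 0 0) * ((trunc_filter b K t \<omega>)^2 - trunc_cov b K 0 0))
     = trunc_cum b K s s t t + 2 * (trunc_cov b K s t)^2"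
  unfolding centered_power2_mult_eq[where x="\<lambda>t. trunc_filter b K t _"]
  using trunc_cov_diag[of b K s] trunc_cov_diag[of b K t]
  by (simp add: integrable_trunc_filter_prod4 integrable_trunc_filter_mult integral_trunc_filter_prod4
      integral_trunc_filter_mult prob_space power2_eq_square)

lemma weighted_sum_power2_eq:
  "(\<Sum>t\<in>I. p t * trunc_filter b K t \<omega>)^2 = (\<Sum>s\<in>I. \<Sum>t\<in>I. (p s * p t) * (trunc_filter b K s \<omega> * trunc_filter b K t \<omega>))"
  by (simp add: power2_eq_square sum_product mult_ac)

lemma integrable_weighted_sum_power2: "integrable M (\<lambda>\<omega>. (\<Sum>t\<in>I. p t * trunc_filter b K t \<omega>)^2)"
  unfolding weighted_sum_power2_eq by (simp add: integrable_trunc_filter_mult)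

lemma integral_weighted_sum_power2:
  "integral\<^sup>L M (\<lambda>\<omega>. (\<Sum>t\<in>I. p t * trunc_filter b K t \<omega>)^2) = (\<Sum>s\<in>I. \<Sum>t\<in>I. p s * p t * trunc_cov b K s t)"
  unfolding weighted_sum_power2_eq by (simp add: integrable_trunc_filter_mult integral_trunc_filter_mult)

lemma trunc_msq_dev_power2_eq:
  assumes "n \<ge> 1"
  shows "(trunc_msq b K n \<omega> - c)^2
    = (\<Sum>s\<in>{1..int n}. \<Sum>t\<in>{1..int n}. ((trunc_filter b K s \<omega>)^2 - c) * ((trunc_filter b K t \<omega>)^2 - c)) / (real n)^2"
proof -
  have "trunc_msq b K n \<omega> - c = (\<Sum>t\<in>{1..int n}. ((trunc_filter b K t \<omega>)^2 - c)) / real n"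
    unfolding trunc_msq_def using assms by (simp add: sum_subtractf field_simps)
  then show ?thesis by (simp add: power_divide power2_eq_square sum_product)
qed

lemma integrable_trunc_msq_dev: "n \<ge> 1 \<Longrightarrow> integrable M (\<lambda>\<omega>. (trunc_msq b K n \<omega> - c)^2)"
  unfolding trunc_msq_dev_power2_eq by (simp add: integrable_centered_power2_mult)

lemma integral_trunc_msq_dev:
  assumes "n \<ge> 1"
  shows "integral\<^sup>L M (\<lambda>\<omega>. (trunc_msq b K n \<omega> - trunc_cov b K 0 0)^2)
     = (\<Sum>s\<in>{1..int n}. \<Sum>t\<in>{1..int n}. trunc_cum b K s s t t + 2 * (trunc_cov b K s t)^2) / (real n)^2"
  unfolding trunc_msq_dev_power2_eq[OF assms]
  by (simp add: integrable_centered_power2_mult integral_centered_power2_mult)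

text \<open>The factor \<open>1\<close> makes the sample mean an instance of the weighted sums above.\<close>

lemma gamma_hat_trunc_filter_eq:
  assumes "n \<ge> 1"
  shows "gamma_hat n (\<lambda>t. trunc_filter b K t \<omega>) = trunc_msq b K n \<omega>
    - (\<Sum>t\<in>{1..int n}. 1 * trunc_filter b K t \<omega>)^2 / (real n)^2
    + (if even n then (\<Sum>t\<in>{1..int n}. (-1) ^ nat t * trunc_filter b K t \<omega>)^2 / (real n)^2 else 0)"
  unfolding gamma_hat_eq[OF assms] trunc_msq_def by (simp add: power_divide)

lemma abs_gamma_hat_trunc_dev_le:
  assumes n: "n \<ge> 1" and a: "a > 0"
  shows "\<bar>gamma_hat n (\<lambda>t. trunc_filter b K t \<omega>) - c\<bar>
    \<le> (trunc_msq b K n \<omega> - c)^2 / (2 * a) + a / 2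
      + (\<Sum>t\<in>{1..int n}. 1 * trunc_filter b K t \<omega>)^2 / (real n)^2
      + (\<Sum>t\<in>{1..int n}. (-1) ^ nat t * trunc_filter b K t \<omega>)^2 / (real n)^2"
proof -
  have "\<bar>T - A + (if e then B else 0) - c\<bar> \<le> \<bar>T - c\<bar> + A + B"
    if "0 \<le> A" "0 \<le> B" for T A B :: real and e
    using that by (cases e) (simp_all add: abs_le_iff, linarith+)
  then have "\<bar>gamma_hat n (\<lambda>t. trunc_filter b K t \<omega>) - c\<bar> \<le> \<bar>trunc_msq b K n \<omega> - c\<bar>
      + (\<Sum>t\<in>{1..int n}. 1 * trunc_filter b K t \<omega>)^2 / (real n)^2
      + (\<Sum>t\<in>{1..int n}. (-1) ^ nat t * trunc_filter b K t \<omega>)^2 / (real n)^2"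
    unfolding gamma_hat_trunc_filter_eq[OF n] by simp
  also have "\<bar>trunc_msq b K n \<omega> - c\<bar> \<le> (trunc_msq b K n \<omega> - c)^2 / (2 * a) + a / 2"
    using sum_squares_bound[of "\<bar>trunc_msq b K n \<omega> - c\<bar>" a] a by (simp add: field_simps power2_eq_square)
  finally show ?thesis by simp
qed

end

section \<open>The infinite filter as a limit of truncations\<close>

lemma power2_sum_mult_le_weighted:
  fixes b u :: "nat \<Rightarrow> real"
  shows "(\<Sum>j<K. b j * u j)^2 \<le> (\<Sum>j<K. \<bar>b j\<bar>) * (\<Sum>j<K. \<bar>b j\<bar> * (u j)^2)"
proof -
  have "\<bar>\<Sum>j<K. b j * u j\<bar> \<le> (\<Sum>j<K. sqrt \<bar>b j\<bar> * (sqrt \<bar>b j\<bar> * \<bar>u j\<bar>))"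
    by (rule order_trans[OF sum_abs]) (simp add: abs_mult mult.assoc[symmetric])
  then have "(\<Sum>j<K. b j * u j)^2 \<le> (\<Sum>j<K. sqrt \<bar>b j\<bar> * (sqrt \<bar>b j\<bar> * \<bar>u j\<bar>))^2"
    by (metis abs_ge_zero power2_abs power_mono)
  also have "\<dots> \<le> (\<Sum>j<K. (sqrt \<bar>b j\<bar>)^2) * (\<Sum>j<K. (sqrt \<bar>b j\<bar> * \<bar>u j\<bar>)^2)"
    by (rule Cauchy_Schwarz_ineq_sum)
  also have "\<dots> = (\<Sum>j<K. \<bar>b j\<bar>) * (\<Sum>j<K. \<bar>b j\<bar> * (u j)^2)"
    by (simp add: power_mult_distrib)
  finally show ?thesis .
qed

context fourth_order_stationary
begin

definition lin_filter :: "(nat \<Rightarrow> real) \<Rightarrow> int \<Rightarrow> 'a \<Rightarrow> real" where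
  "lin_filter b t \<omega> = (\<Sum>j. b j * U (t - int j) \<omega>)"

text \<open>By Cauchy-Schwarz, \<open>(\<Sum> |b\<^sub>j|) filter_dom b t\<close> dominates the squares of all truncations
  \<open>trunc_filter b K t\<close>.\<close>

definition filter_dom :: "(nat \<Rightarrow> real) \<Rightarrow> int \<Rightarrow> 'a \<Rightarrow> real" where
  "filter_dom b t \<omega> = (\<Sum>j. \<bar>b j\<bar> * (U (t - int j) \<omega>)^2)"

lemma borel_measurable_lin_filter [measurable]: "lin_filter b t \<in> borel_measurable M"
  unfolding lin_filter_def by measurable

lemma borel_measurable_filter_dom [measurable]: "filter_dom b t \<in> borel_measurable M"
  unfolding filter_dom_def by measurable

lemma AE_summable_filter_dom:
  assumes b: "summable (\<lambda>j. \<bar>b j\<bar>)"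
  shows "AE \<omega> in M. summable (\<lambda>j. \<bar>b j\<bar> * (U (t - int j) \<omega>)^2)"
proof -
  let ?f = "\<lambda>j \<omega>. ennreal (\<bar>b j\<bar> * (U (t - int j) \<omega>)^2)"
  have "(\<integral>\<^sup>+\<omega>. (\<Sum>j. ?f j \<omega>) \<partial>M) = (\<Sum>j. \<integral>\<^sup>+\<omega>. ?f j \<omega> \<partial>M)"
    by (rule nn_integral_suminf) measurable
  also have "\<dots> = (\<Sum>j. ennreal (\<bar>b j\<bar> * gU 0))"
    by (subst nn_integral_eq_integral) (auto simp: integrable_U_power2 integral_U_power2)
  also have "\<dots> = ennreal (\<Sum>j. \<bar>b j\<bar> * gU 0)"
    by (rule suminf_ennreal2) (auto intro: summable_mult2 b simp: cov_0_nonneg)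
  finally have "(\<integral>\<^sup>+\<omega>. (\<Sum>j. ?f j \<omega>) \<partial>M) \<noteq> \<infinity>" by simp
  then have "AE \<omega> in M. (\<Sum>j. ?f j \<omega>) \<noteq> \<infinity>"
    by (intro nn_integral_PInf_AE) measurable
  then show ?thesis
    by eventually_elim (rule summable_suminf_not_top, auto)
qed

lemma
  assumes b: "summable (\<lambda>j. \<bar>b j\<bar>)"
  shows integrable_filter_dom: "integrable M (filter_dom b t)"
    and integral_filter_dom: "integral\<^sup>L M (filter_dom b t) = (\<Sum>j. \<bar>b j\<bar>) * gU 0"
proof -
  have terms: "\<And>j. integrable M (\<lambda>\<omega>. \<bar>b j\<bar> * (U (t - int j) \<omega>)^2)" by (simp add: integrable_U_power2)
  have AE_summable: "AE \<omega> in M. summable (\<lambda>j. norm (\<bar>b j\<bar> * (U (t - int j) \<omega>)^2))"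
    using AE_summable_filter_dom[OF b, of t] by simp
  have summable_integrals: "summable (\<lambda>j. integral\<^sup>L M (\<lambda>\<omega>. norm (\<bar>b j\<bar> * (U (t - int j) \<omega>)^2)))"
    by (simp add: integral_U_power2 summable_mult2 b)
  show "integrable M (filter_dom b t)"
    unfolding filter_dom_def[abs_def] by (rule integrable_suminf[OF terms AE_summable summable_integrals])
  have "integral\<^sup>L M (filter_dom b t) = (\<Sum>j. integral\<^sup>L M (\<lambda>\<omega>. \<bar>b j\<bar> * (U (t - int j) \<omega>)^2))"
    unfolding filter_dom_def[abs_def] by (rule integral_suminf[OF terms AE_summable summable_integrals])
  also have "\<dots> = (\<Sum>j. \<bar>b j\<bar>) * gU 0" by (simp add: integral_U_power2 suminf_mult2[OF b])
  finally show "integral\<^sup>L M (filter_dom b t) = (\<Sum>j. \<bar>b j\<bar>) * gU 0" .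
qed

lemma AE_trunc_filter_tendsto_bounded:
  assumes b: "summable (\<lambda>j. \<bar>b j\<bar>)"
  shows "AE \<omega> in M. (\<lambda>K. trunc_filter b K t \<omega>) \<longlonglongrightarrow> lin_filter b t \<omega>
    \<and> (\<forall>K. (trunc_filter b K t \<omega>)^2 \<le> (\<Sum>j. \<bar>b j\<bar>) * filter_dom b t \<omega>)"
  using AE_summable_filter_dom[OF b, of t]
proof eventually_elim
  case (elim \<omega>)
  let ?u = "\<lambda>j. U (t - int j) \<omega>"
  have "summable (\<lambda>j. \<bar>b j\<bar> + \<bar>b j\<bar> * (?u j)^2)" using b elim by (rule summable_add)
  moreover have "norm (b j * ?u j) \<le> \<bar>b j\<bar> + \<bar>b j\<bar> * (?u j)^2" for j
    using mult_left_mono[OF abs_mult_le_power2_add[of 1 "?u j"], of "\<bar>b j\<bar>"] by (simp add: abs_mult algebra_simps)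
  ultimately have "summable (\<lambda>j. b j * ?u j)"
    by (rule summable_comparison_test'[where N=0])
  then have lim: "(\<lambda>K. trunc_filter b K t \<omega>) \<longlonglongrightarrow> lin_filter b t \<omega>"
    unfolding trunc_filter_def lin_filter_def by (rule summable_LIMSEQ)
  have "(trunc_filter b K t \<omega>)^2 \<le> (\<Sum>j. \<bar>b j\<bar>) * filter_dom b t \<omega>" for K
  proof -
    have "(trunc_filter b K t \<omega>)^2 \<le> (\<Sum>j<K. \<bar>b j\<bar>) * (\<Sum>j<K. \<bar>b j\<bar> * (?u j)^2)"
      unfolding trunc_filter_def by (rule power2_sum_mult_le_weighted)
    also have "\<dots> \<le> (\<Sum>j. \<bar>b j\<bar>) * filter_dom b t \<omega>"
      unfolding filter_dom_def
      by (intro mult_mono sum_le_suminf b elim) (auto intro: sum_nonneg suminf_nonneg b)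
    finally show ?thesis .
  qed
  with lim show ?case by blast
qed

lemma trunc_cov_0_tendsto:
  assumes b: "summable (\<lambda>j. \<bar>b j\<bar>)"
  shows "(\<lambda>K. trunc_cov b K 0 0) \<longlonglongrightarrow> integral\<^sup>L M (\<lambda>\<omega>. (lin_filter b 1 \<omega>)^2)"
  unfolding trunc_cov_0_eq_integral
proof (rule integral_dominated_convergence[where w="\<lambda>\<omega>. (\<Sum>j. \<bar>b j\<bar>) * filter_dom b 1 \<omega>"])
  show "integrable M (\<lambda>\<omega>. (\<Sum>j. \<bar>b j\<bar>) * filter_dom b 1 \<omega>)" using integrable_filter_dom[OF b] by simp
  show "AE \<omega> in M. (\<lambda>K. (trunc_filter b K 1 \<omega>)^2) \<longlonglongrightarrow> (lin_filter b 1 \<omega>)^2"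
    using AE_trunc_filter_tendsto_bounded[OF b, of 1] by eventually_elim (auto intro: tendsto_power)
  show "AE \<omega> in M. norm ((trunc_filter b K 1 \<omega>)^2) \<le> (\<Sum>j. \<bar>b j\<bar>) * filter_dom b 1 \<omega>" for K
    using AE_trunc_filter_tendsto_bounded[OF b, of 1] by eventually_elim auto
qed measurable

lemma integral_lin_filter:
  assumes b: "summable (\<lambda>j. \<bar>b j\<bar>)"
  shows "integral\<^sup>L M (lin_filter b t) = 0"
proof -
  have "(\<lambda>K. integral\<^sup>L M (trunc_filter b K t)) \<longlonglongrightarrow> integral\<^sup>L M (lin_filter b t)"
  proof (rule integral_dominated_convergence[where w="\<lambda>\<omega>. 1 + (\<Sum>j. \<bar>b j\<bar>) * filter_dom b t \<omega>"])
    show "integrable M (\<lambda>\<omega>. 1 + (\<Sum>j. \<bar>b j\<bar>) * filter_dom b t \<omega>)" using integrable_filter_dom[OF b] by simp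
    show "AE \<omega> in M. (\<lambda>K. trunc_filter b K t \<omega>) \<longlonglongrightarrow> lin_filter b t \<omega>"
      using AE_trunc_filter_tendsto_bounded[OF b, of t] by eventually_elim auto
    show "AE \<omega> in M. norm (trunc_filter b K t \<omega>) \<le> 1 + (\<Sum>j. \<bar>b j\<bar>) * filter_dom b t \<omega>" for K
      using AE_trunc_filter_tendsto_bounded[OF b, of t]
    proof eventually_elim
      case (elim \<omega>)
      have "\<bar>trunc_filter b K t \<omega>\<bar> \<le> 1 + (trunc_filter b K t \<omega>)^2"
        using abs_mult_le_power2_add[of 1 "trunc_filter b K t \<omega>"] by simp
      moreover have "(trunc_filter b K t \<omega>)^2 \<le> (\<Sum>j. \<bar>b j\<bar>) * filter_dom b t \<omega>" using elim by blast
      ultimately show ?case by simp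
    qed
  qed measurable
  moreover have "integral\<^sup>L M (trunc_filter b K t) = 0" for K
    unfolding trunc_filter_def[abs_def] by (simp add: integrable_U integral_U)
  ultimately show ?thesis by (simp add: LIMSEQ_const_iff)
qed

lemma variance_lin_filter:
  assumes "summable (\<lambda>j. \<bar>b j\<bar>)"
  shows "variance (lin_filter b 1) = integral\<^sup>L M (\<lambda>\<omega>. (lin_filter b 1 \<omega>)^2)"
  using integral_lin_filter[OF assms, of 1] by simp

lemma abs_trunc_cov_0_le:
  assumes b: "summable (\<lambda>j. \<bar>b j\<bar>)"
  shows "\<bar>trunc_cov b K 0 0\<bar> \<le> (\<Sum>j. \<bar>b j\<bar>) * ((\<Sum>j. \<bar>b j\<bar>) * gU 0)"
proof -
  have "0 \<le> trunc_cov b K 0 0" unfolding trunc_cov_0_eq_integral by (rule integral_nonneg_AE) simp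
  moreover have "trunc_cov b K 0 0 \<le> integral\<^sup>L M (\<lambda>\<omega>. (\<Sum>j. \<bar>b j\<bar>) * filter_dom b 1 \<omega>)"
    unfolding trunc_cov_0_eq_integral
  proof (rule integral_mono_AE)
    show "integrable M (\<lambda>\<omega>. (trunc_filter b K 1 \<omega>)^2)"
      using integrable_trunc_filter_mult[of b K 1 1] by (simp add: power2_eq_square)
    show "integrable M (\<lambda>\<omega>. (\<Sum>j. \<bar>b j\<bar>) * filter_dom b 1 \<omega>)" using integrable_filter_dom[OF b] by simp
    show "AE \<omega> in M. (trunc_filter b K 1 \<omega>)^2 \<le> (\<Sum>j. \<bar>b j\<bar>) * filter_dom b 1 \<omega>"
      using AE_trunc_filter_tendsto_bounded[OF b, of 1] by eventually_elim auto
  qed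
  ultimately show ?thesis using integral_filter_dom[OF b] by simp
qed

end

lemma summable_on_abs_if_summable_on_abs_int_mult:
  fixes g :: "int \<Rightarrow> real"
  assumes "(\<lambda>h. \<bar>real_of_int h\<bar> * \<bar>g h\<bar>) summable_on UNIV"
  shows "(\<lambda>h. \<bar>g h\<bar>) summable_on UNIV"
proof -
  have "(\<lambda>h. \<bar>g h\<bar>) summable_on (UNIV - {0})"
  proof (rule summable_on_comparison_test)
    show "(\<lambda>h. \<bar>real_of_int h\<bar> * \<bar>g h\<bar>) summable_on (UNIV - {0})"
      using assms by (rule summable_on_subset) simp
    show "\<bar>g h\<bar> \<le> \<bar>real_of_int h\<bar> * \<bar>g h\<bar>" if "h \<in> UNIV - {0}" for h
      using that mult_right_mono[of 1 "\<bar>real_of_int h\<bar>" "\<bar>g h\<bar>"] by simp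
  qed simp
  then have "(\<lambda>h. \<bar>g h\<bar>) summable_on ((UNIV - {0}) \<union> {0})" by (intro summable_on_union) simp_all
  then show ?thesis by simp
qed

lemma sum_reindex_le_infsum:
  fixes f :: "'b \<Rightarrow> real"
  assumes "f summable_on UNIV" "\<And>x. 0 \<le> f x" "finite A" "inj_on \<phi> A"
  shows "(\<Sum>x\<in>A. f (\<phi> x)) \<le> infsum f UNIV"
proof -
  have "(\<Sum>x\<in>A. f (\<phi> x)) = sum f (\<phi> ` A)" by (subst sum.reindex[OF assms(4)]) simp
  also have "\<dots> \<le> infsum f UNIV" using assms by (intro finite_sum_le_infsum) auto
  finally show ?thesis .
qed

locale summable_fourth_order_stationary = fourth_order_stationary +
  assumes summable_cov: "(\<lambda>h. \<bar>real_of_int h\<bar> * \<bar>gU h\<bar>) summable_on (UNIV :: int set)"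
    and summable_cum4: "(\<lambda>(h1, h2, h3). (1 + \<bar>real_of_int h1\<bar> + \<bar>real_of_int h2\<bar> + \<bar>real_of_int h3\<bar>)
                     * \<bar>cum4 M (U 0) (U h1) (U h2) (U h3)\<bar>) summable_on (UNIV :: (int \<times> int \<times> int) set)"
begin

definition cov_abs_sum :: real where
  "cov_abs_sum = infsum (\<lambda>h. \<bar>gU h\<bar>) UNIV"

definition cum_abs_sum :: real where
  "cum_abs_sum = infsum (\<lambda>(h1, h2, h3). \<bar>kappa h1 h2 h3\<bar>) UNIV"

lemma sum_abs_cov_le:
  assumes "finite A" "inj_on \<phi> A"
  shows "(\<Sum>x\<in>A. \<bar>gU (\<phi> x)\<bar>) \<le> cov_abs_sum"
  unfolding cov_abs_sum_def
  by (rule sum_reindex_le_infsum[OF summable_on_abs_if_summable_on_abs_int_mult[OF summable_cov] _ assms]) simp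

lemma abs_cov_le: "\<bar>gU h\<bar> \<le> cov_abs_sum"
  using sum_abs_cov_le[of "{h}" id] by simp

lemma sum_abs_cov_shift_le: "(\<Sum>t\<in>{1..int n}. \<bar>gU (t + c)\<bar>) \<le> cov_abs_sum"
  by (rule sum_abs_cov_le) (auto simp: inj_on_def)

lemma cov_abs_sum_nonneg: "0 \<le> cov_abs_sum"
  using abs_cov_le[of 0] by simp

lemma sum_abs_kappa_shift_le: "(\<Sum>t\<in>{1..int n}. \<bar>kappa h (t + c2) (t + c3)\<bar>) \<le> cum_abs_sum"
proof -
  let ?k = "\<lambda>(h1, h2, h3). \<bar>kappa h1 h2 h3\<bar>"
  have "?k summable_on UNIV"
  proof (rule summable_on_comparison_test[OF summable_cum4])
    fix x :: "int \<times> int \<times> int"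
    obtain h1 h2 h3 where x: "x = (h1, h2, h3)" by (cases x) auto
    have "1 \<le> 1 + \<bar>real_of_int h1\<bar> + \<bar>real_of_int h2\<bar> + \<bar>real_of_int h3\<bar>" by simp
    from mult_right_mono[OF this, of "\<bar>kappa h1 h2 h3\<bar>"]
    show "?k x \<le> (case x of (h1, h2, h3) \<Rightarrow> (1 + \<bar>real_of_int h1\<bar> + \<bar>real_of_int h2\<bar> + \<bar>real_of_int h3\<bar>)
                     * \<bar>cum4 M (U 0) (U h1) (U h2) (U h3)\<bar>)"
      unfolding x by (simp add: kappa_def)
    show "0 \<le> ?k x" unfolding x by simp
  qed
  then have "(\<Sum>t\<in>{1..int n}. ?k (h, t + c2, t + c3)) \<le> cum_abs_sum"
    unfolding cum_abs_sum_def by (rule sum_reindex_le_infsum) (auto simp: inj_on_def)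
  then show ?thesis by simp
qed

lemma cum_abs_sum_nonneg: "0 \<le> cum_abs_sum"
  using sum_abs_kappa_shift_le[of 1 0 0 0] by (meson order_trans abs_ge_zero sum_nonneg)

section \<open>Mean absolute deviation of the estimator\<close>

lemma abs_trunc_cov_le: "\<bar>trunc_cov b K s t\<bar> \<le> (\<Sum>i<K. \<bar>b i\<bar>)^2 * cov_abs_sum"
proof -
  have "\<bar>trunc_cov b K s t\<bar> \<le> (\<Sum>i<K. \<Sum>j<K. \<bar>b i\<bar> * \<bar>b j\<bar> * \<bar>gU ((t - int j) - (s - int i))\<bar>)"
    unfolding trunc_cov_def
    by (rule order_trans[OF sum_abs sum_mono], rule order_trans[OF sum_abs sum_mono]) (simp add: abs_mult)
  also have "\<dots> \<le> (\<Sum>i<K. \<Sum>j<K. \<bar>b i\<bar> * \<bar>b j\<bar> * cov_abs_sum)"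
    by (intro sum_mono mult_left_mono abs_cov_le) auto
  also have "\<dots> = (\<Sum>i<K. \<bar>b i\<bar>)^2 * cov_abs_sum"
    by (simp add: power2_eq_square sum_distrib_left sum_distrib_right mult_ac)
  finally show ?thesis .
qed

lemma sum_abs_trunc_cov_le:
  "(\<Sum>s\<in>{1..int n}. \<Sum>t\<in>{1..int n}. \<bar>trunc_cov b K s t\<bar>) \<le> real n * (\<Sum>i<K. \<bar>b i\<bar>)^2 * cov_abs_sum"
proof -
  let ?I = "{1..int n}" and ?g = "\<lambda>s i j t. \<bar>gU (t + (int i - int j - s))\<bar>"
  have "(\<Sum>s\<in>?I. \<Sum>t\<in>?I. \<bar>trunc_cov b K s t\<bar>) \<le> (\<Sum>s\<in>?I. \<Sum>t\<in>?I. \<Sum>i<K. \<Sum>j<K. \<bar>b i\<bar> * \<bar>b j\<bar> * ?g s i j t)"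
    unfolding trunc_cov_def
    by (intro sum_mono, rule order_trans[OF sum_abs sum_mono], rule order_trans[OF sum_abs sum_mono])
      (simp add: abs_mult algebra_simps)
  also have "\<dots> = (\<Sum>s\<in>?I. \<Sum>i<K. \<Sum>j<K. \<bar>b i\<bar> * \<bar>b j\<bar> * (\<Sum>t\<in>?I. ?g s i j t))"
  proof (rule sum.cong[OF refl])
    fix s
    have "(\<Sum>t\<in>?I. \<Sum>i<K. \<Sum>j<K. \<bar>b i\<bar> * \<bar>b j\<bar> * ?g s i j t)
        = (\<Sum>i<K. \<Sum>j<K. \<Sum>t\<in>?I. \<bar>b i\<bar> * \<bar>b j\<bar> * ?g s i j t)"
      by (subst sum.swap, rule sum.cong[OF refl], rule sum.swap)
    then show "(\<Sum>t\<in>?I. \<Sum>i<K. \<Sum>j<K. \<bar>b i\<bar> * \<bar>b j\<bar> * ?g s i j t)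
        = (\<Sum>i<K. \<Sum>j<K. \<bar>b i\<bar> * \<bar>b j\<bar> * (\<Sum>t\<in>?I. ?g s i j t))"
      by (simp add: sum_distrib_left)
  qed
  also have "\<dots> \<le> (\<Sum>s\<in>?I. \<Sum>i<K. \<Sum>j<K. \<bar>b i\<bar> * \<bar>b j\<bar> * cov_abs_sum)"
    by (intro sum_mono mult_left_mono sum_abs_cov_shift_le) auto
  also have "\<dots> = real n * (\<Sum>i<K. \<bar>b i\<bar>)^2 * cov_abs_sum"
    by (simp add: power2_eq_square sum_distrib_left sum_distrib_right mult_ac)
  finally show ?thesis .
qed

lemma sum_abs_trunc_cum_le:
  "(\<Sum>s\<in>{1..int n}. \<Sum>t\<in>{1..int n}. \<bar>trunc_cum b K s s t t\<bar>) \<le> real n * (\<Sum>i<K. \<bar>b i\<bar>)^4 * cum_abs_sum"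
proof -
  let ?I = "{1..int n}"
  let ?B = "\<lambda>i j k l. \<bar>b i\<bar> * \<bar>b j\<bar> * \<bar>b k\<bar> * \<bar>b l\<bar>"
  let ?k = "\<lambda>s i j k l t. \<bar>kappa (int i - int j) (t + (int i - int k - s)) (t + (int i - int l - s))\<bar>"
  have "(\<Sum>s\<in>?I. \<Sum>t\<in>?I. \<bar>trunc_cum b K s s t t\<bar>)
      \<le> (\<Sum>s\<in>?I. \<Sum>t\<in>?I. \<Sum>i<K. \<Sum>j<K. \<Sum>k<K. \<Sum>l<K. ?B i j k l * ?k s i j k l t)"
    unfolding trunc_cum_def
    by (intro sum_mono, rule order_trans[OF sum_abs sum_mono], rule order_trans[OF sum_abs sum_mono],
        rule order_trans[OF sum_abs sum_mono], rule order_trans[OF sum_abs sum_mono]) (simp add: abs_mult algebra_simps)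
  also have "\<dots> = (\<Sum>s\<in>?I. \<Sum>i<K. \<Sum>j<K. \<Sum>k<K. \<Sum>l<K. ?B i j k l * (\<Sum>t\<in>?I. ?k s i j k l t))"
  proof (rule sum.cong[OF refl])
    fix s
    have "(\<Sum>t\<in>?I. \<Sum>i<K. \<Sum>j<K. \<Sum>k<K. \<Sum>l<K. ?B i j k l * ?k s i j k l t)
        = (\<Sum>i<K. \<Sum>j<K. \<Sum>k<K. \<Sum>l<K. \<Sum>t\<in>?I. ?B i j k l * ?k s i j k l t)"
      by (subst sum.swap, rule sum.cong[OF refl], subst sum.swap, rule sum.cong[OF refl],
          subst sum.swap, rule sum.cong[OF refl], rule sum.swap)
    then show "(\<Sum>t\<in>?I. \<Sum>i<K. \<Sum>j<K. \<Sum>k<K. \<Sum>l<K. ?B i j k l * ?k s i j k l t)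
        = (\<Sum>i<K. \<Sum>j<K. \<Sum>k<K. \<Sum>l<K. ?B i j k l * (\<Sum>t\<in>?I. ?k s i j k l t))"
      by (simp add: sum_distrib_left)
  qed
  also have "\<dots> \<le> (\<Sum>s\<in>?I. \<Sum>i<K. \<Sum>j<K. \<Sum>k<K. \<Sum>l<K. ?B i j k l * cum_abs_sum)"
    by (intro sum_mono mult_left_mono sum_abs_kappa_shift_le) auto
  also have "\<dots> = real n * (\<Sum>i<K. \<bar>b i\<bar>)^4 * cum_abs_sum"
    by (simp add: power4_eq_xxxx sum_distrib_left sum_distrib_right mult_ac)
  finally show ?thesis .
qed

lemma integral_weighted_sum_power2_le:
  assumes p: "\<And>t. \<bar>p t\<bar> \<le> 1"
  shows "integral\<^sup>L M (\<lambda>\<omega>. (\<Sum>t\<in>{1..int n}. p t * trunc_filter b K t \<omega>)^2)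
    \<le> real n * (\<Sum>i<K. \<bar>b i\<bar>)^2 * cov_abs_sum"
proof -
  have "p s * p t * trunc_cov b K s t \<le> \<bar>trunc_cov b K s t\<bar>" for s t
  proof -
    have "\<bar>p s * p t\<bar> \<le> 1" using p[of s] p[of t] by (simp add: abs_mult mult_le_one)
    then have "\<bar>p s * p t * trunc_cov b K s t\<bar> \<le> \<bar>trunc_cov b K s t\<bar>"
      by (simp add: abs_mult mult_left_le_one_le)
    then show ?thesis by simp
  qed
  then have "(\<Sum>s\<in>{1..int n}. \<Sum>t\<in>{1..int n}. p s * p t * trunc_cov b K s t)
      \<le> (\<Sum>s\<in>{1..int n}. \<Sum>t\<in>{1..int n}. \<bar>trunc_cov b K s t\<bar>)"
    by (intro sum_mono)
  also note sum_abs_trunc_cov_le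
  finally show ?thesis unfolding integral_weighted_sum_power2 .
qed

lemma integral_trunc_msq_dev_le:
  assumes n: "n \<ge> 1"
  shows "integral\<^sup>L M (\<lambda>\<omega>. (trunc_msq b K n \<omega> - trunc_cov b K 0 0)^2)
    \<le> (\<Sum>i<K. \<bar>b i\<bar>)^4 * (cum_abs_sum + 2 * cov_abs_sum^2) / real n"
proof -
  let ?I = "{1..int n}" and ?B = "\<Sum>i<K. \<bar>b i\<bar>" and ?G = cov_abs_sum
  have "(trunc_cov b K s t)^2 \<le> \<bar>trunc_cov b K s t\<bar> * (?B^2 * ?G)" for s t
  proof -
    have "(trunc_cov b K s t)^2 = \<bar>trunc_cov b K s t\<bar> * \<bar>trunc_cov b K s t\<bar>"
      by (simp add: power2_eq_square abs_mult_self_eq)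
    also have "\<dots> \<le> \<bar>trunc_cov b K s t\<bar> * (?B^2 * ?G)" by (intro mult_left_mono abs_trunc_cov_le) simp
    finally show ?thesis .
  qed
  then have "(\<Sum>s\<in>?I. \<Sum>t\<in>?I. trunc_cum b K s s t t + 2 * (trunc_cov b K s t)^2)
      \<le> (\<Sum>s\<in>?I. \<Sum>t\<in>?I. \<bar>trunc_cum b K s s t t\<bar>) + 2 * ((\<Sum>s\<in>?I. \<Sum>t\<in>?I. \<bar>trunc_cov b K s t\<bar>) * (?B^2 * ?G))"
    by (simp add: sum.distrib sum_distrib_left sum_distrib_right sum_mono add_mono)
  also have "\<dots> \<le> real n * ?B^4 * cum_abs_sum + 2 * ((real n * ?B^2 * ?G) * (?B^2 * ?G))"
    by (intro add_mono mult_left_mono mult_right_mono sum_abs_trunc_cum_le sum_abs_trunc_cov_le)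
      (simp_all add: cov_abs_sum_nonneg)
  also have "\<dots> = real n * (?B^4 * (cum_abs_sum + 2 * ?G^2))"
    by (simp add: algebra_simps power2_eq_square power4_eq_xxxx)
  finally have "(\<Sum>s\<in>?I. \<Sum>t\<in>?I. trunc_cum b K s s t t + 2 * (trunc_cov b K s t)^2) / (real n)^2
      \<le> real n * (?B^4 * (cum_abs_sum + 2 * ?G^2)) / (real n)^2"
    by (rule divide_right_mono) simp
  then show ?thesis unfolding integral_trunc_msq_dev[OF n] using n by (simp add: power2_eq_square)
qed

lemma integral_gamma_hat_trunc_dev_le:
  assumes n: "n \<ge> 1" and a: "a > 0"
  shows "integral\<^sup>L M (\<lambda>\<omega>. \<bar>gamma_hat n (\<lambda>t. trunc_filter b K t \<omega>) - trunc_cov b K 0 0\<bar>)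
        \<le> (\<Sum>i<K. \<bar>b i\<bar>)^4 * (cum_abs_sum + 2 * cov_abs_sum^2) / (2 * a * real n) + a / 2
          + 2 * (\<Sum>i<K. \<bar>b i\<bar>)^2 * cov_abs_sum / real n"
proof -
  let ?I = "{1..int n}" and ?v = "trunc_cov b K 0 0" and ?B = "\<Sum>i<K. \<bar>b i\<bar>"
  let ?S = "\<lambda>p \<omega>. (\<Sum>t\<in>?I. p t * trunc_filter b K t \<omega>)^2 / (real n)^2"
  let ?p = "\<lambda>t::int. (-1::real) ^ nat t"
  have i0: "integrable M (\<lambda>\<omega>. (trunc_msq b K n \<omega> - ?v)^2 / (2 * a))"
    by (intro integrable_divide integrable_trunc_msq_dev[OF n])
  have i1: "integrable M (?S (\<lambda>_. 1))" and i2: "integrable M (?S ?p)"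
    by (intro integrable_divide integrable_weighted_sum_power2)+
  have i3: "integrable M (\<lambda>\<omega>. a / 2)" by simp
  define R where "R = (\<lambda>\<omega>. (trunc_msq b K n \<omega> - ?v)^2 / (2 * a) + a / 2 + ?S (\<lambda>_. 1) \<omega> + ?S ?p \<omega>)"
  have R_int: "integrable M R"
    unfolding R_def by (intro Bochner_Integration.integrable_add i0 i1 i2 i3)
  have R_ge: "\<bar>gamma_hat n (\<lambda>t. trunc_filter b K t \<omega>) - ?v\<bar> \<le> R \<omega>" for \<omega>
    unfolding R_def by (rule abs_gamma_hat_trunc_dev_le[OF n a])
  have "integral\<^sup>L M (\<lambda>\<omega>. \<bar>gamma_hat n (\<lambda>t. trunc_filter b K t \<omega>) - ?v\<bar>) \<le> integral\<^sup>L M R"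
    using R_ge by (intro integral_mono R_int integrable_real_if_abs_le[OF R_int] borel_measurable_abs
        borel_measurable_diff borel_measurable_gamma_hat[OF n]) simp_all
  also have "integral\<^sup>L M R = integral\<^sup>L M (\<lambda>\<omega>. (trunc_msq b K n \<omega> - ?v)^2) / (2 * a) + a / 2
      + integral\<^sup>L M (\<lambda>\<omega>. (\<Sum>t\<in>?I. 1 * trunc_filter b K t \<omega>)^2) / (real n)^2
      + integral\<^sup>L M (\<lambda>\<omega>. (\<Sum>t\<in>?I. ?p t * trunc_filter b K t \<omega>)^2) / (real n)^2"
    unfolding R_def
    by (subst Bochner_Integration.integral_add[OF Bochner_Integration.integrable_add[OF
          Bochner_Integration.integrable_add[OF i0 i3] i1] i2],
        subst Bochner_Integration.integral_add[OF Bochner_Integration.integrable_add[OF i0 i3] i1],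
        subst Bochner_Integration.integral_add[OF i0 i3]) (simp add: prob_space)
  also have "\<dots> \<le> ?B^4 * (cum_abs_sum + 2 * cov_abs_sum^2) / real n / (2 * a) + a / 2
      + real n * ?B^2 * cov_abs_sum / (real n)^2 + real n * ?B^2 * cov_abs_sum / (real n)^2"
    by (intro add_mono divide_right_mono integral_trunc_msq_dev_le[OF n] integral_weighted_sum_power2_le)
      (use a in auto)
  also have "\<dots> = ?B^4 * (cum_abs_sum + 2 * cov_abs_sum^2) / (2 * a * real n) + a / 2
      + 2 * ?B^2 * cov_abs_sum / real n"
    using n by (simp add: field_simps power2_eq_square)
  finally show ?thesis .
qed

end

lemma (in fourth_order_stationary) AE_gamma_hat_trunc_filter_tendsto:
  assumes b: "summable (\<lambda>j. \<bar>b j\<bar>)" and n: "n \<ge> 1"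
  shows "AE \<omega> in M. (\<lambda>K. gamma_hat n (\<lambda>t. trunc_filter b K t \<omega>)) \<longlonglongrightarrow> gamma_hat n (\<lambda>t. lin_filter b t \<omega>)"
proof -
  have "AE \<omega> in M. \<forall>t\<in>{1..int n}. (\<lambda>K. trunc_filter b K t \<omega>) \<longlonglongrightarrow> lin_filter b t \<omega>"
    using AE_trunc_filter_tendsto_bounded[OF b] by (intro AE_finite_allI) auto
  then show ?thesis
  proof eventually_elim
    case (elim \<omega>)
    then have "(\<lambda>K. trunc_filter b K t \<omega>) \<longlonglongrightarrow> lin_filter b t \<omega>" if "t \<in> {1..int n}" for t
      using that by blast
    with n show ?case unfolding gamma_hat_eq[OF n] by (auto intro!: tendsto_intros)
  qed
qed

context summable_fourth_order_stationary
begin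

lemma integral_gamma_hat_trunc_dev_le_suminf:
  assumes b: "summable (\<lambda>j. \<bar>b j\<bar>)" and n: "n \<ge> 1" and a: "a > 0"
  shows "integral\<^sup>L M (\<lambda>\<omega>. \<bar>gamma_hat n (\<lambda>t. trunc_filter b K t \<omega>) - trunc_cov b K 0 0\<bar>)
    \<le> (\<Sum>j. \<bar>b j\<bar>)^4 * (cum_abs_sum + 2 * cov_abs_sum^2) / (2 * a * real n) + a / 2
      + 2 * (\<Sum>j. \<bar>b j\<bar>)^2 * cov_abs_sum / real n"
proof -
  have "(\<Sum>i<K. \<bar>b i\<bar>) \<le> (\<Sum>j. \<bar>b j\<bar>)" by (rule sum_le_suminf[OF b]) auto
  then have "(\<Sum>i<K. \<bar>b i\<bar>)^4 * (cum_abs_sum + 2 * cov_abs_sum^2) / (2 * a * real n) + a / 2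
      + 2 * (\<Sum>i<K. \<bar>b i\<bar>)^2 * cov_abs_sum / real n
    \<le> (\<Sum>j. \<bar>b j\<bar>)^4 * (cum_abs_sum + 2 * cov_abs_sum^2) / (2 * a * real n) + a / 2
      + 2 * (\<Sum>j. \<bar>b j\<bar>)^2 * cov_abs_sum / real n"
    using a n cov_abs_sum_nonneg cum_abs_sum_nonneg
    by (intro add_mono divide_right_mono mult_right_mono mult_left_mono power_mono) (auto intro: sum_nonneg)
  with integral_gamma_hat_trunc_dev_le[OF n a] show ?thesis by (rule order_trans)
qed

lemma
  assumes b: "summable (\<lambda>j. \<bar>b j\<bar>)" and n: "n \<ge> 1" and a: "a > 0"
  shows integrable_gamma_hat_dev:
      "integrable M (\<lambda>\<omega>. \<bar>gamma_hat n (\<lambda>t. lin_filter b t \<omega>) - integral\<^sup>L M (\<lambda>\<omega>. (lin_filter b 1 \<omega>)^2)\<bar>)"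
    and integral_gamma_hat_dev_le:
      "integral\<^sup>L M (\<lambda>\<omega>. \<bar>gamma_hat n (\<lambda>t. lin_filter b t \<omega>) - integral\<^sup>L M (\<lambda>\<omega>. (lin_filter b 1 \<omega>)^2)\<bar>)
        \<le> (\<Sum>j. \<bar>b j\<bar>)^4 * (cum_abs_sum + 2 * cov_abs_sum^2) / (2 * a * real n) + a / 2
          + 2 * (\<Sum>j. \<bar>b j\<bar>)^2 * cov_abs_sum / real n"
proof -
  let ?I = "{1..int n}" and ?B = "\<Sum>j. \<bar>b j\<bar>" and ?v = "integral\<^sup>L M (\<lambda>\<omega>. (lin_filter b 1 \<omega>)^2)"
  define dev where "dev = (\<lambda>K \<omega>. \<bar>gamma_hat n (\<lambda>t. trunc_filter b K t \<omega>) - trunc_cov b K 0 0\<bar>)"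
  define w where "w = (\<lambda>\<omega>. 3 * ((\<Sum>t\<in>?I. ?B * filter_dom b t \<omega>) / real n) + ?B * (?B * gU 0))"
  have dev_meas: "dev K \<in> borel_measurable M" for K
    unfolding dev_def by (intro borel_measurable_abs borel_measurable_diff borel_measurable_gamma_hat[OF n]) simp_all
  have meas: "(\<lambda>\<omega>. \<bar>gamma_hat n (\<lambda>t. lin_filter b t \<omega>) - ?v\<bar>) \<in> borel_measurable M"
    by (intro borel_measurable_abs borel_measurable_diff borel_measurable_gamma_hat[OF n]) simp_all
  have w_int: "integrable M w" unfolding w_def using integrable_filter_dom[OF b] by simp
  have conv: "AE \<omega> in M. (\<lambda>K. dev K \<omega>) \<longlonglongrightarrow> \<bar>gamma_hat n (\<lambda>t. lin_filter b t \<omega>) - ?v\<bar>"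
    using AE_gamma_hat_trunc_filter_tendsto[OF b n]
    by eventually_elim (unfold dev_def, intro tendsto_intros trunc_cov_0_tendsto[OF b])
  have "AE \<omega> in M. \<forall>t\<in>?I. \<forall>K. (trunc_filter b K t \<omega>)^2 \<le> ?B * filter_dom b t \<omega>"
    using AE_trunc_filter_tendsto_bounded[OF b] by (intro AE_finite_allI) auto
  then have dom: "AE \<omega> in M. norm (dev K \<omega>) \<le> w \<omega>" for K
  proof eventually_elim
    case (elim \<omega>)
    have "\<bar>gamma_hat n (\<lambda>t. trunc_filter b K t \<omega>)\<bar> \<le> 3 * ((\<Sum>t\<in>?I. (trunc_filter b K t \<omega>)^2) / real n)"
      by (rule gamma_hat_abs_le[OF n])
    also have "\<dots> \<le> 3 * ((\<Sum>t\<in>?I. ?B * filter_dom b t \<omega>) / real n)"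
      using elim by (intro mult_left_mono divide_right_mono sum_mono) auto
    finally show ?case unfolding dev_def w_def using abs_trunc_cov_0_le[OF b, of K] by simp
  qed
  show "integrable M (\<lambda>\<omega>. \<bar>gamma_hat n (\<lambda>t. lin_filter b t \<omega>) - ?v\<bar>)"
    using integrable_dominated_convergence[OF meas dev_meas w_int conv dom] .
  have bound_K: "integral\<^sup>L M (dev K) \<le> ?B^4 * (cum_abs_sum + 2 * cov_abs_sum^2) / (2 * a * real n) + a / 2
      + 2 * ?B^2 * cov_abs_sum / real n" for K
    unfolding dev_def by (rule integral_gamma_hat_trunc_dev_le_suminf[OF b n a])
  show "integral\<^sup>L M (\<lambda>\<omega>. \<bar>gamma_hat n (\<lambda>t. lin_filter b t \<omega>) - ?v\<bar>)
      \<le> ?B^4 * (cum_abs_sum + 2 * cov_abs_sum^2) / (2 * a * real n) + a / 2 + 2 * ?B^2 * cov_abs_sum / real n"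
    using LIMSEQ_le_const2[OF integral_dominated_convergence[OF meas dev_meas w_int conv dom]] bound_K by blast
qed

end

section \<open>A lower bound for the variance\<close>

lemma has_integral_cos_int_mult:
  "((\<lambda>x. cos (real_of_int k * x)) has_integral (if k = 0 then 2 * pi else 0)) {-pi..pi}"
proof (cases "k = 0")
  case True
  then show ?thesis using has_integral_const_real[of "1::real" "-pi" pi] by simp
next
  case False
  let ?F = "\<lambda>x. sin (real_of_int k * x) / real_of_int k"
  have "(?F has_vector_derivative cos (real_of_int k * x)) (at x within {-pi..pi})" for x
    using False by (auto intro!: derivative_eq_intros simp flip: has_real_derivative_iff_has_vector_derivative)
  then have "((\<lambda>x. cos (real_of_int k * x)) has_integral (?F pi - ?F (-pi))) {-pi..pi}"
    by (intro fundamental_theorem_of_calculus) auto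
  moreover have "sin (real_of_int k * pi) = 0" using sin_times_pi_eq_0[of "real_of_int k"] by simp
  ultimately show ?thesis using False by simp
qed

text \<open>The quadratic form of the covariances is the integral of \<open>f\<^sub>U\<close> against the nonnegative
  trigonometric polynomial \<open>|\<Sum>\<^sub>j b\<^sub>j e\<^sup>i\<^sup>j\<^sup>\<lambda>|\<^sup>2\<close>, whose integral is \<open>2 \<pi> \<Sum>\<^sub>j b\<^sub>j\<^sup>2\<close>.\<close>

lemma cov_quadratic_form_ge:
  fixes f g :: "_ \<Rightarrow> real" and b :: "nat \<Rightarrow> real"
  assumes spec: "\<And>h. ((\<lambda>x. exp (\<i> * complex_of_real (real_of_int h * x)) * complex_of_real (f x))
                    has_integral complex_of_real (g h)) {-pi..pi}"
    and f_ge: "\<And>x. x \<in> {-pi..pi} \<Longrightarrow> m \<le> f x"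
  shows "2 * pi * m * (\<Sum>j<K. (b j)^2) \<le> (\<Sum>i<K. \<Sum>j<K. b i * b j * g (int i - int j))"
proof -
  have spec_re: "((\<lambda>x. cos (real_of_int h * x) * f x) has_integral g h) {-pi..pi}" for h
    using has_integral_linear[OF spec bounded_linear_Re] by (simp add: o_def Re_exp)
  define P where "P = (\<lambda>x. \<Sum>i<K. \<Sum>j<K. b i * b j * cos (real_of_int (int i - int j) * x))"
  have P_nonneg: "0 \<le> P x" for x
  proof -
    have "P x = (\<Sum>i<K. b i * cos (real i * x))^2 + (\<Sum>i<K. b i * sin (real i * x))^2"
      unfolding P_def power2_eq_square sum_product
      by (simp add: sum.distrib[symmetric] cos_diff algebra_simps)
    then show ?thesis by simp
  qed
  have "((\<lambda>x. \<Sum>i<K. \<Sum>j<K. (b i * b j) * (cos (real_of_int (int i - int j) * x) * f x))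
      has_integral (\<Sum>i<K. \<Sum>j<K. (b i * b j) * g (int i - int j))) {-pi..pi}"
    by (intro has_integral_sum finite_lessThan has_integral_mult_right spec_re)
  then have fP: "((\<lambda>x. f x * P x) has_integral (\<Sum>i<K. \<Sum>j<K. b i * b j * g (int i - int j))) {-pi..pi}"
    unfolding P_def by (simp add: sum_distrib_left mult_ac)
  have "((\<lambda>x. \<Sum>i<K. \<Sum>j<K. (m * b i * b j) * cos (real_of_int (int i - int j) * x))
      has_integral (\<Sum>i<K. \<Sum>j<K. (m * b i * b j) * (if int i - int j = 0 then 2 * pi else 0))) {-pi..pi}"
    by (intro has_integral_sum finite_lessThan has_integral_mult_right has_integral_cos_int_mult)
  moreover have "(\<Sum>i<K. \<Sum>j<K. (m * b i * b j) * (if int i - int j = 0 then 2 * pi else 0))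
      = 2 * pi * m * (\<Sum>j<K. (b j)^2)"
    by (simp add: if_distrib sum_distrib_left power2_eq_square mult_ac cong: if_cong)
  ultimately have mP: "((\<lambda>x. m * P x) has_integral (2 * pi * m * (\<Sum>j<K. (b j)^2))) {-pi..pi}"
    unfolding P_def by (simp add: sum_distrib_left mult_ac)
  show ?thesis
    by (rule has_integral_le[OF mP fP]) (simp add: mult_right_mono P_nonneg f_ge)
qed

lemma spectral_density_ge:
  fixes f :: "real \<Rightarrow> real"
  assumes "continuous_on {0..pi} f" "(INF x\<in>{0..pi}. f x) > 0" "\<And>x. f (- x) = f x"
  obtains m where "m > 0" "\<And>x. x \<in> {-pi..pi} \<Longrightarrow> m \<le> f x"
proof -
  let ?m = "INF x\<in>{0..pi}. f x"
  have bdd: "bdd_below (f ` {0..pi})"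
    using compact_continuous_image[OF assms(1) compact_Icc] by (intro bounded_imp_bdd_below compact_imp_bounded)
  have "?m \<le> f x" if "x \<in> {-pi..pi}" for x
  proof (cases "x \<ge> 0")
    case True
    then show ?thesis using that by (intro cINF_lower[OF bdd]) auto
  next
    case False
    have "?m \<le> f (- x)" using that False by (intro cINF_lower[OF bdd]) auto
    then show ?thesis using assms(3)[of x] by simp
  qed
  with assms(2) show thesis by (rule that)
qed

context fourth_order_stationary
begin

lemma filtered_eq_lin_filter: "filtered lam0 d U t = lin_filter (inv_filter_coeff lam0 d) t"
  by (rule ext) (simp add: filtered_def lin_filter_def)

lemma integral_filtered_power2_ge:
  assumes lam0: "0 < lam0" "lam0 < pi" and d: "0 < d" "d \<le> 1/2"
    and spec: "\<And>h. ((\<lambda>x. exp (\<i> * complex_of_real (real_of_int h * x)) * complex_of_real (f x))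
                    has_integral complex_of_real (gU h)) {-pi..pi}"
    and f_ge: "\<And>x. x \<in> {-pi..pi} \<Longrightarrow> m \<le> f x" and m: "m > 0"
  shows "2 * pi * m * (1 - \<bar>cos lam0\<bar>) / (32 * (sin lam0)^2) / d
    \<le> integral\<^sup>L M (\<lambda>\<omega>. (filtered lam0 d U 1 \<omega>)^2)"
proof -
  let ?b = "inv_filter_coeff lam0 d" and ?c = "(1 - \<bar>cos lam0\<bar>) / (8 * d * (sin lam0)^2)"
  have c: "0 \<le> ?c" using d by simp
  obtain K0 where K0: "(1 - d)^2 * (1 - \<bar>cos lam0\<bar>) / (8 * d * (sin lam0)^2) \<le> (\<Sum>j<K0. (?b j)^2)"
    using sum_power2_inv_filter_coeff_ge[OF lam0] d by fastforce
  have "(1/2)^2 \<le> (1 - d)^2" using d by (intro power_mono) auto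
  from mult_right_mono[OF this c] have "?c / 4 \<le> (1 - d)^2 * ?c" by (simp add: power2_eq_square)
  also have "(1 - d)^2 * ?c = (1 - d)^2 * (1 - \<bar>cos lam0\<bar>) / (8 * d * (sin lam0)^2)" by simp
  finally have "?c / 4 \<le> (\<Sum>j<K0. (?b j)^2)" using K0 by linarith
  then have "2 * pi * m * (?c / 4) \<le> 2 * pi * m * (\<Sum>j<K0. (?b j)^2)" using m by (intro mult_left_mono) auto
  have K0_le: "2 * pi * m * (\<Sum>j<K0. (?b j)^2) \<le> trunc_cov ?b K 0 0" if "K \<ge> K0" for K
  proof -
    have "2 * pi * m * (\<Sum>j<K0. (?b j)^2) \<le> 2 * pi * m * (\<Sum>j<K. (?b j)^2)"
      using that m by (intro mult_left_mono sum_mono2) auto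
    also have "\<dots> \<le> trunc_cov ?b K 0 0"
      unfolding trunc_cov_def using cov_quadratic_form_ge[OF spec f_ge] by simp
    finally show ?thesis .
  qed
  have "summable (\<lambda>j. \<bar>?b j\<bar>)" using lam0 d by (intro summable_abs_inv_filter_coeff) auto
  then have "2 * pi * m * (\<Sum>j<K0. (?b j)^2) \<le> integral\<^sup>L M (\<lambda>\<omega>. (lin_filter ?b 1 \<omega>)^2)"
    using K0_le by (intro LIMSEQ_le_const[OF trunc_cov_0_tendsto]) auto
  with \<open>2 * pi * m * (?c / 4) \<le> _\<close> show ?thesis
    unfolding filtered_eq_lin_filter by (simp add: field_simps)
qed

end

section \<open>Convergence in probability\<close>

lemma (in prob_space) prob_abs_div_minus_one_gt_le:
  assumes "integrable M (\<lambda>\<omega>. \<bar>S \<omega> - v\<bar>)" "S \<in> borel_measurable M" "v > 0" "\<epsilon> > 0"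
  shows "prob {\<omega> \<in> space M. \<bar>S \<omega> / v - 1\<bar> > \<epsilon>} \<le> integral\<^sup>L M (\<lambda>\<omega>. \<bar>S \<omega> - v\<bar>) / (\<epsilon> * v)"
proof -
  have "\<bar>S \<omega> / v - 1\<bar> = \<bar>S \<omega> - v\<bar> / v" for \<omega>
  proof -
    have "S \<omega> / v - 1 = (S \<omega> - v) / v" using assms(3) by (simp add: field_simps)
    then show ?thesis using assms(3) by simp
  qed
  then have "{\<omega> \<in> space M. \<bar>S \<omega> / v - 1\<bar> > \<epsilon>} \<subseteq> {\<omega> \<in> space M. \<bar>S \<omega> - v\<bar> \<ge> \<epsilon> * v}"
    using assms(3) by (auto simp: pos_less_divide_eq)
  then have "prob {\<omega> \<in> space M. \<bar>S \<omega> / v - 1\<bar> > \<epsilon>} \<le> prob {\<omega> \<in> space M. \<bar>S \<omega> - v\<bar> \<ge> \<epsilon> * v}"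
    using assms(2) by (intro finite_measure_mono) measurable
  also have "\<dots> \<le> integral\<^sup>L M (\<lambda>\<omega>. \<bar>S \<omega> - v\<bar>) / (\<epsilon> * v)"
    using assms by (intro integral_Markov_inequality_measure[OF assms(1)]) auto
  finally show ?thesis .
qed

lemma mean_dev_div_le:
  fixes B B0 v V d D G \<eta> \<epsilon> E n :: real
  assumes d: "0 < d" "d \<le> 1" and n: "1 \<le> n" and V: "0 < V" and v: "V / d \<le> v"
   and B: "0 \<le> B" "B \<le> B0 / d" and D: "0 \<le> D" and G: "0 \<le> G" and \<eta>: "0 < \<eta>" and \<epsilon>: "0 < \<epsilon>"
   and E: "E \<le> B^4 * D / (2 * (\<eta> * v) * n) + \<eta> * v / 2 + 2 * B^2 * G / n"
  shows "E / (\<epsilon> * v) \<le> (B0^4 * D / (2 * \<eta> * \<epsilon> * V^2) + 2 * B0^2 * G / (\<epsilon> * V)) / (n * d^2) + \<eta> / (2 * \<epsilon>)"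
proof -
  have v0: "0 < v" using V d v by (smt (verit) divide_pos_pos)
  have inv_v: "1 / v \<le> d / V" using v d V v0 by (simp add: field_simps mult.commute)
  have "E / (\<epsilon> * v) \<le> (B^4 * D / (2 * (\<eta> * v) * n) + \<eta> * v / 2 + 2 * B^2 * G / n) / (\<epsilon> * v)"
    using E v0 \<epsilon> by (intro divide_right_mono) auto
  also have "\<dots> = B^4 * (1 / v)^2 * (D / (2 * \<eta> * \<epsilon> * n)) + \<eta> / (2 * \<epsilon>) + B^2 * (1 / v) * (2 * G / (\<epsilon> * n))"
    using v0 \<epsilon> \<eta> n by (simp add: field_simps power2_eq_square)
  also have "\<dots> \<le> (B0 / d)^4 * (d / V)^2 * (D / (2 * \<eta> * \<epsilon> * n)) + \<eta> / (2 * \<epsilon>)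
      + (B0 / d)^2 * (d / V) * (2 * G / (\<epsilon> * n))"
    using B D G \<epsilon> \<eta> n v0 inv_v
    by (intro add_mono mult_right_mono mult_mono power_mono order_refl) auto
  also have "(B0 / d)^2 * (d / V) * (2 * G / (\<epsilon> * n)) \<le> 2 * B0^2 * G / (\<epsilon> * V) / (n * d^2)"
  proof -
    have "(B0 / d)^2 * (d / V) * (2 * G / (\<epsilon> * n)) = 2 * B0^2 * G / (\<epsilon> * V) / (n * d^2) * d"
      using d V by (simp add: field_simps power2_eq_square)
    also have "\<dots> \<le> 2 * B0^2 * G / (\<epsilon> * V) / (n * d^2)"
      using d n G \<epsilon> V by (intro mult_left_le) auto
    finally show ?thesis .
  qed
  also have "(B0 / d)^4 * (d / V)^2 * (D / (2 * \<eta> * \<epsilon> * n)) = B0^4 * D / (2 * \<eta> * \<epsilon> * V^2) / (n * d^2)"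
    using d V by (simp add: field_simps power2_eq_square power4_eq_xxxx)
  finally show ?thesis by (simp add: add_divide_distrib algebra_simps)
qed

context summable_fourth_order_stationary
begin

lemma prob_gamma_hat_rel_dev_le:
  assumes lam0: "0 < lam0" "lam0 < pi"
    and spec: "\<And>h. ((\<lambda>x. exp (\<i> * complex_of_real (real_of_int h * x)) * complex_of_real (f x))
                    has_integral complex_of_real (gU h)) {-pi..pi}"
    and f_ge: "\<And>x. x \<in> {-pi..pi} \<Longrightarrow> m \<le> f x" and m: "m > 0"
    and \<epsilon>: "\<epsilon> > 0" and \<eta>: "\<eta> > 0"
  obtains C where "\<And>n d. n \<ge> 1 \<Longrightarrow> 0 < d \<Longrightarrow> d \<le> 1/2 \<Longrightarrow>
    prob {\<omega> \<in> space M. \<bar>gamma_hat n (\<lambda>t. filtered lam0 d U t \<omega>) / variance (filtered lam0 d U 1) - 1\<bar> > \<epsilon>}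
      \<le> C / (real n * d^2) + \<eta>"
proof
  let ?V = "2 * pi * m * (1 - \<bar>cos lam0\<bar>) / (32 * (sin lam0)^2)" and ?\<eta> = "2 * \<epsilon> * \<eta>"
  let ?D = "cum_abs_sum + 2 * cov_abs_sum^2"
  fix n :: nat and d :: real assume n: "n \<ge> 1" and d: "0 < d" "d \<le> 1/2"
  let ?b = "inv_filter_coeff lam0 d" and ?X = "\<lambda>t \<omega>. lin_filter (inv_filter_coeff lam0 d) t \<omega>"
  define v where "v = integral\<^sup>L M (\<lambda>\<omega>. (?X 1 \<omega>)^2)"
  have s: "0 < sin lam0" using lam0 by (simp add: sin_gt_zero)
  have "(cos lam0)^2 < 1" using s sin_cos_squared_add[of lam0] by (smt (verit) zero_less_power2)
  then have "0 < ?V" using m s by (simp add: abs_square_less_1)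
  have b: "summable (\<lambda>j. \<bar>?b j\<bar>)" using lam0 d by (intro summable_abs_inv_filter_coeff) auto
  have v: "?V / d \<le> v"
    unfolding v_def filtered_eq_lin_filter[symmetric] using lam0 d spec f_ge m by (rule integral_filtered_power2_ge)
  have v0: "0 < v" using \<open>0 < ?V\<close> v d by (smt (verit) divide_pos_pos)
  have "prob {\<omega> \<in> space M. \<bar>gamma_hat n (\<lambda>t. filtered lam0 d U t \<omega>) / variance (filtered lam0 d U 1) - 1\<bar> > \<epsilon>}
      = prob {\<omega> \<in> space M. \<bar>gamma_hat n (\<lambda>t. ?X t \<omega>) / v - 1\<bar> > \<epsilon>}"
    unfolding filtered_eq_lin_filter variance_lin_filter[OF b] v_def ..
  also have "\<dots> \<le> integral\<^sup>L M (\<lambda>\<omega>. \<bar>gamma_hat n (\<lambda>t. ?X t \<omega>) - v\<bar>) / (\<epsilon> * v)"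
    using v0 \<epsilon> unfolding v_def
    by (intro prob_abs_div_minus_one_gt_le integrable_gamma_hat_dev[OF b n] borel_measurable_gamma_hat[OF n]) simp_all
  also have "\<dots> \<le> ((1 / sin lam0)^4 * ?D / (2 * ?\<eta> * \<epsilon> * ?V^2)
      + 2 * (1 / sin lam0)^2 * cov_abs_sum / (\<epsilon> * ?V)) / (real n * d^2) + ?\<eta> / (2 * \<epsilon>)"
  proof (rule mean_dev_div_le)
    show "(\<Sum>j. \<bar>?b j\<bar>) \<le> (1 / sin lam0) / d"
      using suminf_abs_inv_filter_coeff_le[OF lam0, of d] d by (simp add: field_simps)
    show "integral\<^sup>L M (\<lambda>\<omega>. \<bar>gamma_hat n (\<lambda>t. ?X t \<omega>) - v\<bar>)
        \<le> (\<Sum>j. \<bar>?b j\<bar>)^4 * ?D / (2 * (?\<eta> * v) * real n) + ?\<eta> * v / 2 + 2 * (\<Sum>j. \<bar>?b j\<bar>)^2 * cov_abs_sum / real n"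
      using v0 \<epsilon> \<eta> unfolding v_def by (intro integral_gamma_hat_dev_le[OF b n]) simp
    show "0 \<le> (\<Sum>j. \<bar>?b j\<bar>)" using b by (intro suminf_nonneg) auto
    show "0 \<le> ?D" using cov_abs_sum_nonneg cum_abs_sum_nonneg by simp
  qed (use n d \<open>0 < ?V\<close> v \<epsilon> \<eta> cov_abs_sum_nonneg in simp_all)
  also have "?\<eta> / (2 * \<epsilon>) = \<eta>" using \<epsilon> by simp
  finally show "prob {\<omega> \<in> space M. \<bar>gamma_hat n (\<lambda>t. filtered lam0 d U t \<omega>) / variance (filtered lam0 d U 1) - 1\<bar> > \<epsilon>}
      \<le> ((1 / sin lam0)^4 * ?D / (2 * ?\<eta> * \<epsilon> * ?V^2) + 2 * (1 / sin lam0)^2 * cov_abs_sum / (\<epsilon> * ?V))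
        / (real n * d^2) + \<eta>" .
qed

end

lemma tendsto_zero_if_Theta_neg_powr:
  fixes \<delta> :: "nat \<Rightarrow> real"
  assumes "\<delta> \<in> \<Theta>(\<lambda>n. real n powr (- \<alpha>))" "\<alpha> > 0"
  shows "\<delta> \<longlonglongrightarrow> 0"
proof -
  note assms(1)
  also have "(\<lambda>n. real n powr (- \<alpha>)) \<in> o(\<lambda>_. 1)"
    using assms(2) by real_asymp
  finally show ?thesis by (auto dest: smalloD_tendsto)
qed

lemma inverse_mult_power2_tendsto_zero_if_Theta_neg_powr:
  fixes \<delta> :: "nat \<Rightarrow> real"
  assumes "\<delta> \<in> \<Theta>(\<lambda>n. real n powr (- \<alpha>))" "\<alpha> < 1/2"
  shows "(\<lambda>n. 1 / (real n * (\<delta> n)^2)) \<longlonglongrightarrow> 0"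
proof -
  have "(\<lambda>n. 1 / (real n * (\<delta> n)^2)) \<in> \<Theta>(\<lambda>n. 1 / (real n * (real n powr (- \<alpha>))^2))"
    unfolding power2_eq_square using assms(1) by (intro bigtheta_divide landau_theta.mult) simp_all
  also have "(\<lambda>n. 1 / (real n * (real n powr (- \<alpha>))^2)) \<in> o(\<lambda>_. 1)"
    using assms(2) by real_asymp
  finally show ?thesis by (auto dest: smalloD_tendsto)
qed

lemma tendsto_zero_if_eventually_le_add:
  fixes P x :: "nat \<Rightarrow> real"
  assumes "\<And>n. 0 \<le> P n" "x \<longlonglongrightarrow> 0"
    and bound: "\<And>\<eta>. \<eta> > 0 \<Longrightarrow> \<exists>C. eventually (\<lambda>n. P n \<le> C * x n + \<eta>) sequentially"
  shows "P \<longlonglongrightarrow> 0"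
proof (rule order_tendstoI)
  show "eventually (\<lambda>n. a < P n) sequentially" if "a < 0" for a
    using assms(1) that by (intro always_eventually allI) (rule less_le_trans)
  show "eventually (\<lambda>n. P n < e) sequentially" if e: "e > 0" for e
  proof -
    obtain C where C: "eventually (\<lambda>n. P n \<le> C * x n + e / 2) sequentially"
      using bound[of "e / 2"] e by auto
    have "(\<lambda>n. C * x n) \<longlonglongrightarrow> 0" using tendsto_mult_right_zero[OF assms(2)] .
    then have "eventually (\<lambda>n. C * x n < e / 2) sequentially" using e by (intro order_tendstoD) auto
    with C show ?thesis by eventually_elim simp
  qed
qed

theorem lemma5:
  fixes M :: "'a measure" and U :: "int \<Rightarrow> 'a \<Rightarrow> real"
    and \<gamma>U :: "int \<Rightarrow> real" and fU :: "real \<Rightarrow> real"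
    and lam0 \<alpha> :: real and \<delta> :: "nat \<Rightarrow> real"
  assumes "prob_space M"
    and lam0: "0 < lam0" "lam0 < pi"
    and meas: "\<And>t. U t \<in> borel_measurable M"
    and mom4: "\<And>t. integrable M (\<lambda>\<omega>. (U t \<omega>) ^ 4)"
    and mean0: "\<And>t. integral\<^sup>L M (U t) = 0"
    and cov: "\<And>t h. integral\<^sup>L M (\<lambda>\<omega>. U t \<omega> * U (t + h) \<omega>) = \<gamma>U h"
    and spec_nonneg: "\<And>lam. lam \<in> {-pi..pi} \<Longrightarrow> fU lam \<ge> 0"
    and spec_even: "\<And>lam. fU (- lam) = fU lam"
    and spec: "\<And>h. ((\<lambda>lam. exp (\<i> * complex_of_real (real_of_int h * lam)) * complex_of_real (fU lam))
                    has_integral complex_of_real (\<gamma>U h)) {-pi..pi}"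
    and spec_cont: "continuous_on {0..pi} fU"
    and spec_pos: "(INF lam\<in>{0..pi}. fU lam) > 0"
    and cum_stat: "\<And>t h1 h2 h3. cum4 M (U t) (U (t + h1)) (U (t + h2)) (U (t + h3))
                                 = cum4 M (U 0) (U h1) (U h2) (U h3)"
    and cov_sum: "(\<lambda>h. \<bar>real_of_int h\<bar> * \<bar>\<gamma>U h\<bar>) summable_on (UNIV :: int set)"
    and cum_sum: "(\<lambda>(h1, h2, h3). (1 + \<bar>real_of_int h1\<bar> + \<bar>real_of_int h2\<bar> + \<bar>real_of_int h3\<bar>)
                     * \<bar>cum4 M (U 0) (U h1) (U h2) (U h3)\<bar>) summable_on (UNIV :: (int \<times> int \<times> int) set)"
    and delta_range: "\<And>n. 0 < \<delta> n \<and> \<delta> n < 1"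
    and alpha: "0 < \<alpha>" "\<alpha> < 1/3"
    and delta_order: "\<delta> \<in> \<Theta>(\<lambda>n. real n powr (- \<alpha>))"
  shows "\<forall>\<epsilon>>0. (\<lambda>n. measure M {\<omega> \<in> space M.
            \<bar>gamma_hat n (\<lambda>t. filtered lam0 (\<delta> n) U t \<omega>)
              / prob_space.variance M (filtered lam0 (\<delta> n) U 1) - 1\<bar> > \<epsilon>})
         \<longlonglongrightarrow> 0"
proof (intro allI impI)
  fix \<epsilon> :: real assume \<epsilon>: "\<epsilon> > 0"
  interpret summable_fourth_order_stationary M U \<gamma>U
    using \<open>prob_space M\<close> meas mom4 mean0 cov cum_stat cov_sum cum_sum
    by (simp add: summable_fourth_order_stationary_def summable_fourth_order_stationary_axioms_def
        fourth_order_stationary_def fourth_order_stationary_axioms_def)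
  obtain m where m: "m > 0" "\<And>x. x \<in> {-pi..pi} \<Longrightarrow> m \<le> fU x"
    using spectral_density_ge[OF spec_cont spec_pos spec_even] by blast
  have "eventually (\<lambda>n. \<delta> n < 1/2) sequentially"
    using order_tendstoD(2)[OF tendsto_zero_if_Theta_neg_powr[OF delta_order alpha(1)], of "1/2"] by simp
  then have small: "eventually (\<lambda>n. n \<ge> 1 \<and> 0 < \<delta> n \<and> \<delta> n \<le> 1/2) sequentially"
    using eventually_ge_at_top[of 1] by eventually_elim (use delta_range in auto)
  let ?P = "\<lambda>n d. prob {\<omega> \<in> space M.
    \<bar>gamma_hat n (\<lambda>t. filtered lam0 d U t \<omega>) / variance (filtered lam0 d U 1) - 1\<bar> > \<epsilon>}"
  show "(\<lambda>n. ?P n (\<delta> n)) \<longlonglongrightarrow> 0"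
  proof (rule tendsto_zero_if_eventually_le_add)
    show "(\<lambda>n. 1 / (real n * (\<delta> n)^2)) \<longlonglongrightarrow> 0"
      using inverse_mult_power2_tendsto_zero_if_Theta_neg_powr[OF delta_order] alpha by simp
    fix \<eta> :: real assume "\<eta> > 0"
    then obtain C where "\<And>n d. n \<ge> 1 \<Longrightarrow> 0 < d \<Longrightarrow> d \<le> 1/2 \<Longrightarrow> ?P n d \<le> C / (real n * d^2) + \<eta>"
      using prob_gamma_hat_rel_dev_le[OF lam0 spec m(2) m(1) \<epsilon>] by blast
    with small have "eventually (\<lambda>n. ?P n (\<delta> n) \<le> C * (1 / (real n * (\<delta> n)^2)) + \<eta>) sequentially"
      by (auto elim: eventually_mono)
    then show "\<exists>C. eventually (\<lambda>n. ?P n (\<delta> n) \<le> C * (1 / (real n * (\<delta> n)^2)) + \<eta>) sequentially" ..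
  qed simp
qed

end
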